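(* In the multiplexing scheme with $N\ge1$ homogeneous channels, blocklength $n>0$, common error probability $\epsilon\in(0,1)$ and waiting times $\mathbf{T}=(T_0,\dots,T_{N-1})^T$, let $Y_i$ be the time from a successful reception on channel $i$ to the next successful reception on any channel. Then $$\mathbb{E}[Y_i]=\frac{\sum_{j=0}^{N-1}\epsilon^jT_{(i+j)\bmod N}}{1-\epsilon^N},\qquad \sum_{i=0}^{N-1}\mathbb{E}[Y_i]=\frac{n}{1-\epsilon},$$ and the time-average AoI is $$\bar\Delta_{\mathrm{MP}}=\frac{1-\epsilon}{2n(1-\epsilon^N)}\,\mathbf{T}^T\mathbf{M}\mathbf{T}+n,$$ where $\mathbf{M}$ is the real symmetric circulant $N\times N$ matrix with entries $M_{r,s}=m_{(s-r)\bmod N}$, $m_j=\frac{\epsilon^j+\epsilon^{N-j}}{1-\epsilon}$ for $j=0,\dots,N-1$.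
   Context: Multiplexing (MP) scheme: time is continuous, in symbol durations; $N$ parallel channels; blocklength $n>0$; shifts $0=\delta_0\le\delta_1\le\dots\le\delta_{N-1}<n$. On channel $i$, for each integer $m\ge0$, a fresh update is generated at time $\delta_i+mn$ and successfully received at time $\delta_i+(m+1)n$ with probability $1-\epsilon$, independently across all transmissions and channels. The Age of Information is $\Delta(t)=t-r(t)$ with $r(t)$ the generation time of the most recently generated update received by time $t$, and $\bar\Delta_{\mathrm{MP}}=\lim_{T\to\infty}\frac1T\int_0^T\Delta(t)dt$. Waiting times: $T_i=\delta_{i+1}-\delta_i$ for $i\le N-2$, $T_{N-1}=n-\delta_{N-1}$. *)

theory Defs
  imports "HOL-Probability.Probability"
begin

text \<open>Transmissions are enumerated in the order
  k = m * N + i  (channel i = k mod N, transmission number m = k div N).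
  Transmission k is generated at delta i + m n and received at delta i + (m+1) n;
  these reception times are nondecreasing in k.\<close>

definition mp_gen_time :: "(nat \<Rightarrow> real) \<Rightarrow> nat \<Rightarrow> nat \<Rightarrow> nat \<Rightarrow> real" where
  "mp_gen_time \<delta> n N k = \<delta> (k mod N) + real (k div N) * real n"

definition mp_recv_time :: "(nat \<Rightarrow> real) \<Rightarrow> nat \<Rightarrow> nat \<Rightarrow> nat \<Rightarrow> real" where
  "mp_recv_time \<delta> n N k = \<delta> (k mod N) + real (k div N + 1) * real n"

definition mp_succ :: "(nat \<times> nat \<Rightarrow> 'a \<Rightarrow> bool) \<Rightarrow> nat \<Rightarrow> 'a \<Rightarrow> nat \<Rightarrow> bool" where
  "mp_succ X N \<omega> k = X (k mod N, k div N) \<omega>"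

definition mp_next_succ :: "(nat \<times> nat \<Rightarrow> 'a \<Rightarrow> bool) \<Rightarrow> nat \<Rightarrow> 'a \<Rightarrow> nat \<Rightarrow> nat" where
  "mp_next_succ X N \<omega> k = (LEAST k'. k < k' \<and> mp_succ X N \<omega> k')"

definition mp_Y :: "(nat \<Rightarrow> real) \<Rightarrow> nat \<Rightarrow> nat \<Rightarrow> (nat \<times> nat \<Rightarrow> 'a \<Rightarrow> bool) \<Rightarrow> nat \<Rightarrow> 'a \<Rightarrow> real" where
  "mp_Y \<delta> n N X i \<omega> = mp_recv_time \<delta> n N (mp_next_succ X N \<omega> i) - mp_recv_time \<delta> n N i"

definition cond_mean :: "'a measure \<Rightarrow> 'a set \<Rightarrow> ('a \<Rightarrow> real) \<Rightarrow> real" where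
  "cond_mean M A f = (\<integral>\<omega>. indicator A \<omega> * f \<omega> \<partial>M) / measure M A"

definition mp_latest_gen :: "(nat \<Rightarrow> real) \<Rightarrow> nat \<Rightarrow> nat \<Rightarrow> (nat \<times> nat \<Rightarrow> 'a \<Rightarrow> bool) \<Rightarrow> 'a \<Rightarrow> real \<Rightarrow> real" where
  "mp_latest_gen \<delta> n N X \<omega> t =
     (let S = {mp_gen_time \<delta> n N k | k. mp_succ X N \<omega> k \<and> mp_recv_time \<delta> n N k \<le> t}
      in if S = {} then 0 else Max S)"

definition mp_aoi :: "(nat \<Rightarrow> real) \<Rightarrow> nat \<Rightarrow> nat \<Rightarrow> (nat \<times> nat \<Rightarrow> 'a \<Rightarrow> bool) \<Rightarrow> 'a \<Rightarrow> real \<Rightarrow> real" where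
  "mp_aoi \<delta> n N X \<omega> t = t - mp_latest_gen \<delta> n N X \<omega> t"

definition mp_T :: "(nat \<Rightarrow> real) \<Rightarrow> nat \<Rightarrow> nat \<Rightarrow> nat \<Rightarrow> real" where
  "mp_T \<delta> n N i = (if i + 2 \<le> N then \<delta> (i + 1) - \<delta> i else real n - \<delta> (N - 1))"

definition mp_m :: "real \<Rightarrow> nat \<Rightarrow> nat \<Rightarrow> real" where
  "mp_m \<epsilon> N j = (\<epsilon> ^ j + \<epsilon> ^ (N - j)) / (1 - \<epsilon>)"

definition mp_M :: "real \<Rightarrow> nat \<Rightarrow> nat \<Rightarrow> nat \<Rightarrow> real" where
  "mp_M \<epsilon> N r s = mp_m \<epsilon> N ((s + N - r) mod N)"

definition quad_form :: "nat \<Rightarrow> (nat \<Rightarrow> nat \<Rightarrow> real) \<Rightarrow> (nat \<Rightarrow> real) \<Rightarrow> real" where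
  "quad_form N A v = (\<Sum>r<N. \<Sum>s<N. v r * A r s * v s)"

end

theory Submission
  imports Defs "HOL-Real_Asymp.Real_Asymp"
begin

text \<open>Enumerate the transmissions of all channels by reception time: consecutive receptions
  are then separated by the N-periodic gaps T_{k mod N}. Y_i is the sum of the gaps over the run
  of failures following transmission i, so its conditional mean is a geometric series, which
  folds over one period.

  For the time average, once some update has arrived, the area under the AoI between receptions
  k and k + 1 is T_k (n + T_k / 2) + T_k O_k, where O_k is the time since the last successful
  reception. Expanding O_k over the number j of trailing failures writes the sum of the T_k O_k
  as a sum over lags j of terms T_k T_{k-j} [the last j transmissions failed], which are
  independent within each residue class of k modulo j. Along (p + 1)^8 periods, Hoeffding's
  inequality and Borel-Cantelli give almost sure convergence of the normalized sum to
  sum_j eps^j P_j, where P_j is the autocorrelation of the gaps; monotonicity of the AoI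
  integral extends the limit from this subsequence to all T, and folding the series over one
  period produces the circulant quadratic form.\<close>

lemma sum_rotate_mod:
  assumes "0 < (N::nat)"
  shows "(\<Sum>i<N. f ((i + j) mod N)) = (\<Sum>i<N. f i)"
proof -
  have jN: "j mod N < N" using assms by simp
  have left_inv: "((i + (N - j mod N)) mod N + j) mod N = i" if "i < N" for i
  proof -
    have "((i + (N - j mod N)) mod N + j) mod N = (i + (N - j mod N) + j) mod N"
      by (simp add: mod_add_left_eq)
    also have "i + (N - j mod N) + j = i + N + N * (j div N)"
      using jN mult_div_mod_eq[of N j] by linarith
    finally show ?thesis using that by simp
  qed
  have right_inv: "((i + j) mod N + (N - j mod N)) mod N = i" if "i < N" for i
  proof -
    have "((i + j) mod N + (N - j mod N)) mod N = (i + j + (N - j mod N)) mod N"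
      by (simp add: mod_add_left_eq)
    also have "i + j + (N - j mod N) = i + N + N * (j div N)"
      using jN mult_div_mod_eq[of N j] by linarith
    finally show ?thesis using that by simp
  qed
  show ?thesis
    by (rule sum.reindex_bij_witness[where j = "\<lambda>i. (i + j) mod N"
          and i = "\<lambda>i. (i + (N - j mod N)) mod N"]) (use assms left_inv right_inv in auto)
qed

lemma mod_add_diff_cancel:
  assumes "(a::nat) < N" "d < N"
  shows "((a + d) mod N + N - a) mod N = d"
proof -
  have "(a + d) mod N + N - a = (a + d) mod N + (N - a)" using assms by simp
  then have "((a + d) mod N + N - a) mod N = (a + d + (N - a)) mod N"
    by (simp add: mod_add_left_eq)
  also have "a + d + (N - a) = d + N" using assms by simp
  finally show ?thesis using assms by simp
qed

lemma mod_eq_less_imp_add_le: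
  fixes k k' j :: nat
  assumes "0 < j" "k mod j = k' mod j" "k < k'"
  shows "k + j \<le> k'"
proof -
  have "j dvd k' - k" using mod_eq_dvd_iff_nat[of k k' j] assms by simp
  then have "j \<le> k' - k" using assms by (intro dvd_imp_le) auto
  then show ?thesis using assms by simp
qed

lemma sum_lessThan_periodic:
  fixes g :: "nat \<Rightarrow> real"
  assumes per: "\<And>k. g (k + N) = g k"
  shows "(\<Sum>k<m * N. g k) = real m * (\<Sum>k<N. g k)"
proof (induction m)
  case 0 then show ?case by simp
next
  case (Suc m)
  have per_m: "g (k + m * N) = g k" for k
  proof (induction m)
    case (Suc m)
    have "k + Suc m * N = (k + m * N) + N" by simp
    then show ?case using per Suc by metis
  qed simp
  have "{..<Suc m * N} = {..<m * N} \<union> {m * N..<m * N + N}" by auto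
  then have "(\<Sum>k<Suc m * N. g k) = (\<Sum>k<m * N. g k) + (\<Sum>k\<in>{m * N..<m * N + N}. g k)"
    by (simp add: sum.union_disjoint ivl_disj_int)
  also have "(\<Sum>k\<in>{m * N..<m * N + N}. g k) = (\<Sum>k<N. g k)"
    using sum.shift_bounds_nat_ivl[of g 0 "m * N" N] by (simp add: add.commute per_m lessThan_atLeast0)
  finally show ?case using Suc by (simp add: algebra_simps)
qed

lemma suminf_periodic_geometric:
  fixes f :: "nat \<Rightarrow> real"
  assumes "summable f" "0 < N" and per: "\<And>l. f (l + N) = c * f l" and "\<bar>c\<bar> < 1"
  shows "suminf f = (\<Sum>l<N. f l) / (1 - c)"
proof -
  have block: "sum f {q * N..<q * N + N} = c ^ q * (\<Sum>l<N. f l)" for q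
  proof (induction q)
    case 0 then show ?case by (simp add: lessThan_atLeast0)
  next
    case (Suc q)
    have "sum f {Suc q * N..<Suc q * N + N} = (\<Sum>l\<in>{q * N..<q * N + N}. f (l + N))"
      using sum.shift_bounds_nat_ivl[of f "q * N" N "q * N + N"] by (simp add: algebra_simps)
    also have "\<dots> = c * sum f {q * N..<q * N + N}" by (simp add: per sum_distrib_left)
    finally show ?case using Suc by simp
  qed
  have "(\<lambda>q. sum f {q * N..<q * N + N}) sums suminf f"
    using sums_group[OF summable_sums] assms by blast
  then have "(\<lambda>q. c ^ q * (\<Sum>l<N. f l)) sums suminf f" by (simp add: block)
  moreover have "(\<lambda>q. c ^ q * (\<Sum>l<N. f l)) sums ((\<Sum>l<N. f l) / (1 - c))"
    using sums_mult2[OF geometric_sums[of c], of "\<Sum>l<N. f l"] assms by simp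
  ultimately show ?thesis using sums_unique2 by blast
qed

lemma summable_real_power_times_geometric:
  fixes q :: real
  assumes q: "0 \<le> q" "q < 1"
  shows "summable (\<lambda>p. real p ^ k * q ^ p)"
proof -
  define s where "s = root (Suc k) q"
  \<comment> \<open>p^k q^p = (p s^p)^k s^p, and p s^p is eventually at most 1\<close>
  have "s ^ Suc k = q"
    unfolding s_def by (rule real_root_pow_pos2) (use q in auto)
  then have s: "0 \<le> s" "s < 1" "s ^ Suc k = q"
    using q by (simp_all add: s_def)
  have "(\<lambda>p. of_nat p * s ^ p) \<longlonglongrightarrow> (0::real)"
    by (rule powser_times_n_limit_0) (use s in simp)
  from order_tendstoD(2)[OF this, of 1]
  have ev: "eventually (\<lambda>p. real p * s ^ p \<le> 1) sequentially"
    by (auto elim: eventually_mono)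
  show ?thesis
  proof (rule summable_comparison_test_ev[OF _ summable_geometric[of s]])
    show "eventually (\<lambda>p. norm (real p ^ k * q ^ p) \<le> s ^ p) sequentially"
      using ev
    proof eventually_elim
      case (elim p)
      have "real p ^ k * q ^ p = (real p * s ^ p) ^ k * s ^ p"
        by (simp add: s(3)[symmetric] power_mult_distrib power_mult[symmetric] mult.commute power_add)
      also have "\<dots> \<le> 1 ^ k * s ^ p"
        using elim s by (intro mult_right_mono power_mono) auto
      finally show ?case using s q by simp
    qed
  qed (use s in simp)
qed

lemma tendsto_eventually_close:
  fixes f g e :: "'b \<Rightarrow> real"
  assumes "(g \<longlongrightarrow> L) F" "(e \<longlongrightarrow> 0) F" "eventually (\<lambda>x. \<bar>f x - g x\<bar> \<le> e x) F"
  shows "(f \<longlongrightarrow> L) F"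
proof -
  have "((\<lambda>x. f x - g x) \<longlongrightarrow> 0) F"
    by (rule Lim_null_comparison[OF _ assms(2)]) (use assms(3) in \<open>auto elim: eventually_mono\<close>)
  from tendsto_add[OF this assms(1)] show ?thesis by simp
qed

lemma bracketing_index:
  fixes s :: "nat \<Rightarrow> real"
  assumes mono: "\<And>p q. p \<le> q \<Longrightarrow> s p \<le> s q" and unbounded: "\<And>T. \<exists>p. T < s p"
  obtains h :: "real \<Rightarrow> nat" where "filterlim h sequentially at_top"
    and "\<And>T. T < s (Suc (h T))" and "\<And>T. s 0 \<le> T \<Longrightarrow> s (h T) \<le> T"
proof
  define h where "h T = (LEAST p. T < s (Suc p))" for T
  have "\<exists>p. T < s (Suc p)" for T
    using unbounded[of T] mono by (metis le_SucI order_less_le_trans order_refl)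
  then show above: "T < s (Suc (h T))" for T
    unfolding h_def by (rule LeastI_ex)
  show "s (h T) \<le> T" if "s 0 \<le> T" for T
  proof (cases "h T")
    case (Suc q)
    then have "\<not> T < s (Suc q)"
      using not_less_Least[of q "\<lambda>p. T < s (Suc p)"] by (simp add: h_def)
    then show ?thesis using Suc by simp
  qed (use that in simp)
  show "filterlim h sequentially at_top"
    unfolding filterlim_at_top
  proof
    fix Z :: nat
    show "\<forall>\<^sub>F T in at_top. Z \<le> h T"
      using eventually_ge_at_top[of "s Z"]
      by eventually_elim (use above mono in \<open>metis not_less_eq_eq not_le order_trans\<close>)
  qed
qed

lemma tendsto_ratio_shifted:
  fixes F :: "real \<Rightarrow> real" and s :: "nat \<Rightarrow> real"
  assumes s_pos: "\<And>p. 0 < s p" and ratio: "(\<lambda>p. s (Suc p) / s p) \<longlonglongrightarrow> 1"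
    and lim: "(\<lambda>p. F (s p) / s p) \<longlonglongrightarrow> L"
  shows "(\<lambda>p. F (s p) / s (Suc p)) \<longlonglongrightarrow> L" and "(\<lambda>p. F (s (Suc p)) / s p) \<longlonglongrightarrow> L"
proof -
  have "(\<lambda>p. F (s p) / s p * (s p / s (Suc p))) \<longlonglongrightarrow> L * 1"
    using tendsto_mult[OF lim tendsto_inverse[OF ratio]] by (simp add: inverse_divide)
  then show "(\<lambda>p. F (s p) / s (Suc p)) \<longlonglongrightarrow> L"
    using s_pos by (simp add: less_imp_neq[symmetric])
  have "(\<lambda>p. F (s (Suc p)) / s (Suc p) * (s (Suc p) / s p)) \<longlonglongrightarrow> L * 1"
    by (intro tendsto_mult ratio LIMSEQ_Suc[OF lim])
  then show "(\<lambda>p. F (s (Suc p)) / s p) \<longlonglongrightarrow> L"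
    using s_pos by (simp add: less_imp_neq[symmetric])
qed

lemma tendsto_ratio_of_mono_subsequence:
  fixes F :: "real \<Rightarrow> real" and s :: "nat \<Rightarrow> real"
  assumes F_mono: "\<And>a b. 0 \<le> a \<Longrightarrow> a \<le> b \<Longrightarrow> F a \<le> F b"
    and F_nonneg: "\<And>a. 0 \<le> a \<Longrightarrow> 0 \<le> F a"
    and s_pos: "\<And>p. 0 < s p" and s_mono: "\<And>p q. p \<le> q \<Longrightarrow> s p \<le> s q"
    and s_unbounded: "\<And>T. \<exists>p. T < s p"
    and ratio: "(\<lambda>p. s (Suc p) / s p) \<longlonglongrightarrow> 1"
    and lim: "(\<lambda>p. F (s p) / s p) \<longlonglongrightarrow> L"
  shows "((\<lambda>T. F T / T) \<longlongrightarrow> L) at_top"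
proof -
  obtain h where h: "filterlim h sequentially at_top" and above: "\<And>T. T < s (Suc (h T))"
    and below: "\<And>T. s 0 \<le> T \<Longrightarrow> s (h T) \<le> T"
    using bracketing_index[OF s_mono s_unbounded] by blast
  from filterlim_compose[OF tendsto_ratio_shifted(1)[OF s_pos ratio lim] h]
  have lower: "((\<lambda>T. F (s (h T)) / s (Suc (h T))) \<longlongrightarrow> L) at_top" by (simp add: o_def)
  from filterlim_compose[OF tendsto_ratio_shifted(2)[OF s_pos ratio lim] h]
  have upper: "((\<lambda>T. F (s (Suc (h T))) / s (h T)) \<longlongrightarrow> L) at_top" by (simp add: o_def)
  show ?thesis
  proof (rule tendsto_sandwich[OF _ _ lower upper])
    show "\<forall>\<^sub>F T in at_top. F (s (h T)) / s (Suc (h T)) \<le> F T / T"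
      using eventually_ge_at_top[of "s 0"]
    proof eventually_elim
      case (elim T)
      have "0 < T" "0 \<le> F (s (h T))" using s_pos[of 0] s_pos[of "h T"] elim F_nonneg by auto
      then have "F (s (h T)) / s (Suc (h T)) \<le> F (s (h T)) / T"
        using above[of T] by (intro divide_left_mono) auto
      also have "\<dots> \<le> F T / T"
        using F_mono[of "s (h T)" T] below[OF elim] s_pos[of "h T"] \<open>0 < T\<close>
        by (intro divide_right_mono) auto
      finally show ?case .
    qed
    show "\<forall>\<^sub>F T in at_top. F T / T \<le> F (s (Suc (h T))) / s (h T)"
      using eventually_ge_at_top[of "s 0"]
    proof eventually_elim
      case (elim T)
      have "0 < T" "0 \<le> F (s (Suc (h T)))" using s_pos[of 0] s_pos[of "Suc (h T)"] elim F_nonneg by auto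
      then have "F T / T \<le> F (s (Suc (h T))) / T"
        using F_mono[of T "s (Suc (h T))"] above[of T] by (intro divide_right_mono) auto
      also have "\<dots> \<le> F (s (Suc (h T))) / s (h T)"
        using \<open>0 \<le> F (s (Suc (h T)))\<close> \<open>0 < T\<close> below[OF elim] s_pos[of "h T"]
        by (intro divide_left_mono) auto
      finally show ?case .
    qed
  qed
qed

lemma has_integral_minus_const:
  fixes a b c :: real
  assumes "a \<le> b"
  shows "((\<lambda>t. t - c) has_integral ((b\<^sup>2 - a\<^sup>2) / 2 - c * (b - a))) {a..b}"
proof -
  have "((\<lambda>t. t - c) has_integral ((\<lambda>t. t\<^sup>2 / 2 - c * t) b - (\<lambda>t. t\<^sup>2 / 2 - c * t) a)) {a..b}"
  proof (rule fundamental_theorem_of_calculus[OF assms])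
    fix t assume "t \<in> {a..b}"
    have "((\<lambda>t. t\<^sup>2 / 2 - c * t) has_real_derivative (t - c)) (at t within {a..b})"
      by (auto intro!: derivative_eq_intros simp: power2_eq_square)
    then show "((\<lambda>t. t\<^sup>2 / 2 - c * t) has_vector_derivative (t - c)) (at t within {a..b})"
      by (simp add: has_real_derivative_iff_has_vector_derivative)
  qed
  then show ?thesis by (rule has_integral_eq_rhs) (simp add: field_simps)
qed

locale mp_scheme = prob_space M for M :: "'a measure" +
  fixes X :: "nat \<times> nat \<Rightarrow> 'a \<Rightarrow> bool" and N n :: nat and \<delta> :: "nat \<Rightarrow> real" and \<epsilon> :: real
  assumes N_ge_1: "N \<ge> 1" and n_pos: "n > 0" and shift_0: "\<delta> 0 = 0"
    and shift_mono: "\<And>i. i + 1 < N \<Longrightarrow> \<delta> i \<le> \<delta> (i + 1)"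
    and shift_last_lt: "\<delta> (N - 1) < real n"
    and eps_pos: "0 < \<epsilon>" and eps_lt_1: "\<epsilon> < 1"
    and X_indep: "indep_vars (\<lambda>_. count_space UNIV) X ({..<N} \<times> UNIV)"
    and prob_X: "\<And>i m. i < N \<Longrightarrow> measure M {\<omega> \<in> space M. X (i, m) \<omega>} = 1 - \<epsilon>"
begin

definition success :: "nat \<Rightarrow> 'a \<Rightarrow> bool" where
  "success k \<omega> = X (k mod N, k div N) \<omega>"

definition gap :: "nat \<Rightarrow> real" where
  "gap k = mp_T \<delta> n N (k mod N)"

definition recv :: "nat \<Rightarrow> real" where
  "recv k = mp_recv_time \<delta> n N k"

lemma N_pos: "N > 0"
  using N_ge_1 by simp

lemma shift_mono_le: "i \<le> j \<Longrightarrow> j < N \<Longrightarrow> \<delta> i \<le> \<delta> j"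
proof (induction j)
  case (Suc j)
  then show ?case using shift_mono[of j] by (cases "i = Suc j") auto
qed simp

lemma shift_nonneg: "i < N \<Longrightarrow> 0 \<le> \<delta> i"
  using shift_mono_le[of 0 i] shift_0 by simp

lemma shift_less_n: "i < N \<Longrightarrow> \<delta> i < real n"
  using shift_mono_le[of i "N - 1"] shift_last_lt by fastforce

lemma mp_T_nonneg: "0 \<le> mp_T \<delta> n N i"
  unfolding mp_T_def using shift_mono[of i] shift_last_lt by auto

lemma mp_T_le: "mp_T \<delta> n N i \<le> real n"
  unfolding mp_T_def
  using shift_nonneg[of i] shift_less_n[of "i + 1"] shift_nonneg[of "N - 1"] N_pos by auto

lemma sum_mp_T: "(\<Sum>i<N. mp_T \<delta> n N i) = real n"
proof -
  obtain N' where N': "N = Suc N'" using N_pos by (cases N) auto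
  have "(\<Sum>i<N'. mp_T \<delta> n N i) = (\<Sum>i<N'. \<delta> (Suc i) - \<delta> i)"
    by (rule sum.cong) (auto simp: mp_T_def N')
  also have "\<dots> = \<delta> N' - \<delta> 0" by (rule sum_lessThan_telescope)
  finally show ?thesis using N' shift_0 by (simp add: mp_T_def)
qed

lemma gap_nonneg: "0 \<le> gap k"
  unfolding gap_def by (rule mp_T_nonneg)

lemma gap_le: "gap k \<le> real n"
  unfolding gap_def by (rule mp_T_le)

lemma gap_mod: "gap (k mod N) = gap k"
  by (simp add: gap_def)

lemma gap_add_N: "gap (k + N) = gap k"
  by (simp add: gap_def)

lemma recv_Suc: "recv (Suc k) = recv k + gap k"
proof (cases "Suc (k mod N) < N")
  case True
  then have "Suc k mod N = Suc (k mod N)" "Suc k div N = k div N"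
    by (simp_all add: mod_Suc div_Suc)
  then show ?thesis using True by (simp add: recv_def gap_def mp_recv_time_def mp_T_def)
next
  case False
  then have last: "k mod N = N - 1" using N_pos
    by (metis Suc_lessI diff_Suc_1 mod_less_divisor)
  then have "Suc k mod N = 0" "Suc k div N = Suc (k div N)" using N_pos False
    by (auto simp add: mod_Suc div_Suc)
  then show ?thesis using False last shift_0
    by (simp add: recv_def gap_def mp_recv_time_def mp_T_def algebra_simps)
qed

lemma recv_0: "recv 0 = real n"
  by (simp add: recv_def mp_recv_time_def shift_0)

lemma recv_eq_sum_gap: "recv k = real n + (\<Sum>l<k. gap l)"
  by (induction k) (simp_all add: recv_0 recv_Suc)

lemma recv_mono: "k \<le> l \<Longrightarrow> recv k \<le> recv l"
  unfolding recv_eq_sum_gap by (auto intro!: sum_mono2 gap_nonneg)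

lemma recv_ge_n: "real n \<le> recv k"
  using recv_mono[of 0 k] recv_0 by simp

lemma recv_diff:
  assumes "k \<le> l"
  shows "recv l - recv k = (\<Sum>i\<in>{k..<l}. gap i)"
proof -
  have "{..<l} = {..<k} \<union> {k..<l}" using assms by auto
  then show ?thesis unfolding recv_eq_sum_gap by (simp add: sum.union_disjoint ivl_disj_int)
qed

lemma recv_mult_N: "recv (m * N) = real (m + 1) * real n"
  using N_pos by (simp add: recv_def mp_recv_time_def shift_0)

lemma recv_unbounded: "\<exists>k. t < recv k"
proof -
  obtain m :: nat where "t / real n < real m" using reals_Archimedean2 by blast
  then have "t < real m * real n" using n_pos by (simp add: field_simps)
  also have "\<dots> \<le> recv (m * N)" using recv_mult_N[of m] n_pos by simp
  finally show ?thesis by blast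
qed

lemma mp_gen_time_eq: "mp_gen_time \<delta> n N k = recv k - real n"
  by (simp add: recv_def mp_recv_time_def mp_gen_time_def algebra_simps)

lemma success_0: "i < N \<Longrightarrow> success i = X (i, 0)"
  by (rule ext) (simp add: success_def)

lemma measurable_success[measurable]: "success k \<in> measurable M (count_space UNIV)"
proof -
  have "X (k mod N, k div N) \<in> measurable M (count_space UNIV)"
    using X_indep N_pos unfolding indep_vars_def by auto
  then show ?thesis by (simp add: success_def[abs_def])
qed

lemma indep_vars_success: "indep_vars (\<lambda>_. count_space UNIV) success UNIV"
proof -
  define p where "p k = (k mod N, k div N)" for k :: nat
  have "inj p"
  proof (rule injI)
    fix a b assume "p a = p b"
    then have "a mod N = b mod N" "a div N = b div N" by (auto simp: p_def)
    then show "a = b" by (metis div_mult_mod_eq)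
  qed
  then have "disjoint_family_on (\<lambda>k. {p k}) UNIV"
    by (auto simp: disjoint_family_on_def inj_eq)
  moreover have "{p k} \<subseteq> {..<N} \<times> UNIV" for k
    using N_pos by (simp add: p_def)
  ultimately have "indep_vars (\<lambda>k. PiM {p k} (\<lambda>_. count_space UNIV)) (\<lambda>k \<omega>. restrict (\<lambda>i. X i \<omega>) {p k}) UNIV"
    by (intro indep_vars_restrict[OF X_indep]) auto
  then have "indep_vars (\<lambda>_. count_space UNIV) (\<lambda>k \<omega>. (\<lambda>f. f (p k)) (restrict (\<lambda>i. X i \<omega>) {p k})) UNIV"
    by (rule indep_vars_compose2) (rule measurable_component_singleton, simp)
  then show ?thesis
    by (rule indep_vars_cong[THEN iffD1, rotated -1]) (auto simp: success_def[abs_def] p_def)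
qed

lemma prob_success: "prob {\<omega> \<in> space M. success k \<omega>} = 1 - \<epsilon>"
  using prob_X[of "k mod N" "k div N"] N_pos by (simp add: success_def)

lemma prob_failure: "prob {\<omega> \<in> space M. \<not> success k \<omega>} = \<epsilon>"
proof -
  have "{\<omega> \<in> space M. \<not> success k \<omega>} = space M - {\<omega> \<in> space M. success k \<omega>}" by auto
  then show ?thesis using prob_success by (simp add: prob_compl)
qed

lemma prob_success_failure_pattern:
  assumes "finite S" "finite F" "S \<inter> F = {}"
  shows "prob {\<omega> \<in> space M. (\<forall>k\<in>S. success k \<omega>) \<and> (\<forall>k\<in>F. \<not> success k \<omega>)}
           = (1 - \<epsilon>) ^ card S * \<epsilon> ^ card F"
proof (cases "S \<union> F = {}")
  case True then show ?thesis by (simp add: prob_space)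
next
  case False
  define A where "A k = {k \<in> S}" for k
  have preimage: "success k -` A k \<inter> space M
      = {\<omega> \<in> space M. if k \<in> S then success k \<omega> else \<not> success k \<omega>}" for k
    by (auto simp: A_def)
  have "{\<omega> \<in> space M. (\<forall>k\<in>S. success k \<omega>) \<and> (\<forall>k\<in>F. \<not> success k \<omega>)}
      = (\<Inter>k\<in>S \<union> F. success k -` A k \<inter> space M)"
    unfolding preimage using False assms(3) by auto
  also have "prob \<dots> = (\<Prod>k\<in>S \<union> F. prob (success k -` A k \<inter> space M))"
    by (rule indep_varsD[OF indep_vars_success]) (use False assms in auto)
  also have "\<dots> = (\<Prod>k\<in>S. prob (success k -` A k \<inter> space M)) * (\<Prod>k\<in>F. prob (success k -` A k \<inter> space M))"
    using assms by (simp add: prod.union_disjoint)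
  also have "(\<Prod>k\<in>S. prob (success k -` A k \<inter> space M)) = (\<Prod>k\<in>S. 1 - \<epsilon>)"
    by (rule prod.cong) (simp_all add: preimage prob_success)
  also have "(\<Prod>k\<in>F. prob (success k -` A k \<inter> space M)) = (\<Prod>k\<in>F. \<epsilon>)"
  proof (rule prod.cong)
    fix k assume "k \<in> F"
    then have "k \<notin> S" using assms(3) by auto
    then show "prob (success k -` A k \<inter> space M) = \<epsilon>" by (simp add: preimage prob_failure)
  qed simp
  finally show ?thesis by simp
qed

lemma prob_failures:
  assumes "finite F"
  shows "prob {\<omega> \<in> space M. \<forall>k\<in>F. \<not> success k \<omega>} = \<epsilon> ^ card F"
  using prob_success_failure_pattern[of "{}" F] assms by simp

lemma eps_power_N_less_1: "\<epsilon> ^ N < 1"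
  using eps_pos eps_lt_1 N_pos by (simp add: power_less_one_iff)

lemma summable_geometric_times_bounded:
  fixes f :: "nat \<Rightarrow> real"
  assumes "\<And>l. \<bar>f l\<bar> \<le> B"
  shows "summable (\<lambda>l. \<epsilon> ^ l * f l)"
proof (rule summable_comparison_test[OF _ summable_mult[OF summable_geometric[of \<epsilon>], of B]])
  show "\<exists>l0. \<forall>l\<ge>l0. norm (\<epsilon> ^ l * f l) \<le> B * \<epsilon> ^ l"
    using assms eps_pos by (auto simp: abs_mult mult.commute intro: mult_right_mono)
qed (use eps_pos eps_lt_1 in simp)

section \<open>The mean of Y\<close>

lemma mp_succ_eq_success: "mp_succ X N \<omega> k = success k \<omega>"
  by (simp add: mp_succ_def success_def)

lemma mp_Y_eq: "mp_Y \<delta> n N X i \<omega> = recv (LEAST k. i < k \<and> success k \<omega>) - recv i"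
  by (simp add: mp_Y_def mp_next_succ_def mp_succ_eq_success recv_def)

lemma borel_measurable_mp_Y[measurable]: "(\<lambda>\<omega>. mp_Y \<delta> n N X i \<omega>) \<in> borel_measurable M"
proof -
  have "(\<lambda>\<omega>. LEAST k. i < k \<and> success k \<omega>) \<in> measurable M (count_space UNIV)"
    by measurable
  then have "(\<lambda>\<omega>. recv (LEAST k. i < k \<and> success k \<omega>)) \<in> borel_measurable M"
    by (rule measurable_compose) simp
  then show ?thesis unfolding mp_Y_eq by measurable
qed

lemma AE_success_after: "AE \<omega> in M. \<exists>k>i. success k \<omega>"
proof (rule AE_I')
  let ?B = "{\<omega> \<in> space M. \<forall>k>i. \<not> success k \<omega>}"
  have "prob ?B \<le> \<epsilon> ^ l" for l
  proof -
    have "prob ?B \<le> prob {\<omega> \<in> space M. \<forall>k\<in>{Suc i..i + l}. \<not> success k \<omega>}"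
      by (intro finite_measure_mono) auto
    also have "\<dots> = \<epsilon> ^ l" by (simp add: prob_failures)
    finally show ?thesis .
  qed
  moreover have "(\<lambda>l. \<epsilon> ^ l) \<longlonglongrightarrow> 0"
    using eps_pos eps_lt_1 by (intro LIMSEQ_power_zero) simp
  ultimately have "prob ?B \<le> 0"
    by (intro LIMSEQ_le_const) auto
  then have "prob ?B = 0" using measure_nonneg[of M ?B] by linarith
  moreover have "?B \<in> sets M" by measurable
  ultimately show "?B \<in> null_sets M" by (simp add: null_sets_def emeasure_eq_measure)
qed auto

definition success_then_failures :: "nat \<Rightarrow> nat \<Rightarrow> 'a set" where
  "success_then_failures i l = {\<omega> \<in> space M. success i \<omega> \<and> (\<forall>k\<in>{Suc i..i + l}. \<not> success k \<omega>)}"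

lemma sets_success_then_failures[measurable]: "success_then_failures i l \<in> sets M"
  unfolding success_then_failures_def by measurable

lemma prob_success_then_failures: "prob (success_then_failures i l) = (1 - \<epsilon>) * \<epsilon> ^ l"
  using prob_success_failure_pattern[of "{i}" "{Suc i..i + l}"]
  by (simp add: success_then_failures_def)

lemma indicator_mp_Y_eq_suminf:
  assumes "\<exists>k>i. success k \<omega>"
  shows "indicator {\<omega> \<in> space M. success i \<omega>} \<omega> * mp_Y \<delta> n N X i \<omega>
           = (\<Sum>l. gap (i + l) * indicator (success_then_failures i l) \<omega>)"
proof -
  define next_succ where "next_succ = (LEAST k. i < k \<and> success k \<omega>)"
  have next_succ: "i < next_succ" "success next_succ \<omega>"
    using LeastI_ex[of "\<lambda>k. i < k \<and> success k \<omega>"] assms by (auto simp: next_succ_def)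
  have before: "\<not> success k \<omega>" if "i < k" "k < next_succ" for k
    using not_less_Least[of k "\<lambda>k. i < k \<and> success k \<omega>"] that by (auto simp: next_succ_def)
  let ?I = "indicator {\<omega> \<in> space M. success i \<omega>} \<omega> :: real"
  have "(\<Sum>l. gap (i + l) * indicator (success_then_failures i l) \<omega>)
      = (\<Sum>l<next_succ - i. gap (i + l) * indicator (success_then_failures i l) \<omega>)"
  proof (rule suminf_finite)
    fix l assume "l \<notin> {..<next_succ - i}"
    then have "next_succ \<in> {Suc i..i + l}" using next_succ by auto
    then show "gap (i + l) * indicator (success_then_failures i l) \<omega> = 0"
      using next_succ by (auto simp: success_then_failures_def split: split_indicator)
  qed simp
  also have "\<dots> = (\<Sum>l<next_succ - i. ?I * gap (l + i))"
    by (rule sum.cong) (use before in \<open>auto simp: success_then_failures_def indicator_def add.commute\<close>)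
  also have "\<dots> = ?I * (\<Sum>l\<in>{i..<next_succ}. gap l)"
    using sum.shift_bounds_nat_ivl[of gap 0 i "next_succ - i"] next_succ
    by (simp add: sum_distrib_left lessThan_atLeast0)
  also have "\<dots> = ?I * mp_Y \<delta> n N X i \<omega>"
    using recv_diff[of i next_succ] next_succ by (simp add: mp_Y_eq next_succ_def)
  finally show ?thesis by simp
qed

lemma integral_indicator_mp_Y:
  "(\<integral>\<omega>. indicator {\<omega> \<in> space M. success i \<omega>} \<omega> * mp_Y \<delta> n N X i \<omega> \<partial>M)
     = (\<Sum>l. gap (i + l) * ((1 - \<epsilon>) * \<epsilon> ^ l))"
proof -
  let ?f = "\<lambda>l \<omega>. gap (i + l) * indicator (success_then_failures i l) \<omega>"
  have integrable: "integrable M (?f l)" for l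
    by (intro integrable_mult_right integrable_real_indicator) (auto simp: emeasure_eq_measure)
  have integral: "integral\<^sup>L M (?f l) = gap (i + l) * ((1 - \<epsilon>) * \<epsilon> ^ l)" for l
    by (simp add: prob_success_then_failures)
  have "\<bar>(1 - \<epsilon>) * gap (i + l)\<bar> \<le> real n" for l
    using gap_nonneg[of "i + l"] gap_le[of "i + l"] eps_pos eps_lt_1 mult_left_le_one_le[of "gap (i + l)" "1 - \<epsilon>"]
    by (simp add: abs_mult)
  then have "summable (\<lambda>l. \<epsilon> ^ l * ((1 - \<epsilon>) * gap (i + l)))"
    by (rule summable_geometric_times_bounded)
  moreover have "(\<integral>\<omega>. norm (?f l \<omega>) \<partial>M) = \<epsilon> ^ l * ((1 - \<epsilon>) * gap (i + l))" for l
    using integral[of l] gap_nonneg[of "i + l"]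
    by (subst Bochner_Integration.integral_cong[OF refl, where g = "?f l"]) (auto simp: abs_mult)
  ultimately have summable_norms: "summable (\<lambda>l. \<integral>\<omega>. norm (?f l \<omega>) \<partial>M)"
    by simp
  have "AE \<omega> in M. summable (\<lambda>l. norm (?f l \<omega>))"
    using AE_success_after[of i]
  proof eventually_elim
    case (elim \<omega>)
    then obtain k where "i < k" "success k \<omega>" by auto
    then show ?case
      by (intro summable_finite[of "{..<k}"]) (auto simp: success_then_failures_def split: split_indicator)
  qed
  from integral_suminf[OF integrable this summable_norms]
  have "(\<integral>\<omega>. (\<Sum>l. ?f l \<omega>) \<partial>M) = (\<Sum>l. integral\<^sup>L M (?f l))" .
  moreover have "(\<integral>\<omega>. indicator {\<omega> \<in> space M. success i \<omega>} \<omega> * mp_Y \<delta> n N X i \<omega> \<partial>M)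
      = (\<integral>\<omega>. (\<Sum>l. ?f l \<omega>) \<partial>M)"
    by (rule integral_cong_AE)
       (use AE_success_after[of i] in \<open>auto elim: AE_mp intro!: indicator_mp_Y_eq_suminf\<close>)
  ultimately show ?thesis by (simp add: integral prob_success_then_failures)
qed

lemma cond_mean_mp_Y:
  assumes "i < N"
  shows "cond_mean M {\<omega> \<in> space M. X (i, 0) \<omega>} (mp_Y \<delta> n N X i)
          = (\<Sum>j<N. \<epsilon> ^ j * mp_T \<delta> n N ((i + j) mod N)) / (1 - \<epsilon> ^ N)"
proof -
  have summable: "summable (\<lambda>l. \<epsilon> ^ l * gap (i + l))"
    using gap_nonneg gap_le by (intro summable_geometric_times_bounded[where B = "real n"]) auto
  have "(\<Sum>l. gap (i + l) * ((1 - \<epsilon>) * \<epsilon> ^ l)) = (1 - \<epsilon>) * (\<Sum>l. \<epsilon> ^ l * gap (i + l))"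
    using suminf_mult[OF summable, of "1 - \<epsilon>"] by (simp add: algebra_simps)
  also have "(\<Sum>l. \<epsilon> ^ l * gap (i + l)) = (\<Sum>l<N. \<epsilon> ^ l * gap (i + l)) / (1 - \<epsilon> ^ N)"
  proof (rule suminf_periodic_geometric[OF summable N_pos])
    show "\<epsilon> ^ (l + N) * gap (i + (l + N)) = \<epsilon> ^ N * (\<epsilon> ^ l * gap (i + l))" for l
      using gap_add_N[of "i + l"] by (simp add: power_add add.assoc)
  qed (use eps_pos eps_power_N_less_1 in simp)
  finally show ?thesis
    using success_0[OF assms, symmetric] prob_success[of i] eps_lt_1
    by (simp add: cond_mean_def integral_indicator_mp_Y gap_def)
qed

lemma sum_cond_mean_mp_Y:
  "(\<Sum>i<N. cond_mean M {\<omega> \<in> space M. X (i, 0) \<omega>} (mp_Y \<delta> n N X i)) = real n / (1 - \<epsilon>)"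
proof -
  have "(\<Sum>i<N. \<Sum>j<N. \<epsilon> ^ j * mp_T \<delta> n N ((i + j) mod N))
      = (\<Sum>j<N. \<epsilon> ^ j * (\<Sum>i<N. mp_T \<delta> n N ((i + j) mod N)))"
    by (subst sum.swap) (simp add: sum_distrib_left)
  also have "\<dots> = real n * (\<Sum>j<N. \<epsilon> ^ j)"
    by (simp add: sum_rotate_mod[OF N_pos] sum_mp_T sum_distrib_left mult.commute)
  also have "(\<Sum>j<N. \<epsilon> ^ j) = (1 - \<epsilon> ^ N) / (1 - \<epsilon>)"
    using eps_lt_1 by (simp add: sum_gp_strict)
  finally show ?thesis
    using eps_power_N_less_1 by (simp add: cond_mean_mp_Y sum_divide_distrib[symmetric])
qed

section \<open>The AoI integral along a sample path\<close>

definition latest_gen :: "nat \<Rightarrow> 'a \<Rightarrow> real" where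
  "latest_gen k \<omega> =
     (if \<exists>l\<le>k. success l \<omega> then recv (Max {l. l \<le> k \<and> success l \<omega>}) - real n else 0)"

definition aoi_area :: "nat \<Rightarrow> 'a \<Rightarrow> real" where
  "aoi_area k \<omega> = (gap k)\<^sup>2 / 2 + gap k * (recv k - latest_gen k \<omega>)"

text \<open>The time elapsed between the last successful reception up to k and reception k, written as
  a sum over the number j of trailing failures so that it is linear in failure indicators.\<close>

definition outage :: "nat \<Rightarrow> 'a \<Rightarrow> real" where
  "outage k \<omega> = (\<Sum>j\<in>{1..k}. gap (k - j) * of_bool (\<forall>l\<in>{Suc k - j..k}. \<not> success l \<omega>))"

definition aoi_area_via_outage :: "nat \<Rightarrow> 'a \<Rightarrow> real" where
  "aoi_area_via_outage k \<omega> = gap k * (real n + gap k / 2) + gap k * outage k \<omega>"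

definition aoi_integral :: "'a \<Rightarrow> real \<Rightarrow> real" where
  "aoi_integral \<omega> T = integral {0..T} (mp_aoi \<delta> n N X \<omega>)"

lemma recv_bracket:
  assumes "recv 0 \<le> t"
  obtains k where "recv k \<le> t" "t < recv (Suc k)"
proof -
  obtain K where "t < recv K" using recv_unbounded by blast
  define K0 where "K0 = (LEAST K. t < recv K)"
  have K0: "t < recv K0"
    using LeastI[of "\<lambda>K. t < recv K", OF \<open>t < recv K\<close>] by (simp add: K0_def)
  then obtain k where k: "K0 = Suc k" using assms by (cases K0) auto
  then have "\<not> t < recv k"
    using not_less_Least[of k "\<lambda>K. t < recv K"] by (simp add: K0_def)
  then show ?thesis using that[of k] K0 k by (simp add: not_less)
qed

lemma mp_latest_gen_eq_latest_gen:
  assumes "recv k \<le> t" "t < recv (Suc k)"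
  shows "mp_latest_gen \<delta> n N X \<omega> t = latest_gen k \<omega>"
proof -
  have "recv l \<le> t \<longleftrightarrow> l \<le> k" for l
    using recv_mono[of l k] recv_mono[of "Suc k" l] assms by (cases "l \<le> k") auto
  then have S: "{mp_gen_time \<delta> n N l |l. mp_succ X N \<omega> l \<and> mp_recv_time \<delta> n N l \<le> t}
      = (\<lambda>l. recv l - real n) ` {l. l \<le> k \<and> success l \<omega>}"
    by (auto simp: mp_gen_time_eq mp_succ_eq_success recv_def[symmetric])
  show ?thesis
  proof (cases "\<exists>l\<le>k. success l \<omega>")
    case True
    have "mono (\<lambda>l. recv l - real n)" by (auto intro!: monoI recv_mono)
    from mono_Max_commute[OF this, of "{l. l \<le> k \<and> success l \<omega>}"] True
    show ?thesis unfolding mp_latest_gen_def Let_def S latest_gen_def by auto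
  next
    case False
    then show ?thesis unfolding mp_latest_gen_def Let_def S latest_gen_def if_not_P[OF False] by simp
  qed
qed

lemma mp_latest_gen_before_recv_0:
  assumes "t < recv 0"
  shows "mp_latest_gen \<delta> n N X \<omega> t = 0"
proof -
  have "\<not> recv l \<le> t" for l using recv_mono[of 0 l] assms by simp
  then show ?thesis by (auto simp: mp_latest_gen_def recv_def[symmetric])
qed

lemma latest_gen_le: "latest_gen k \<omega> \<le> recv k - real n"
proof (cases "\<exists>l\<le>k. success l \<omega>")
  case True
  then have "Max {l. l \<le> k \<and> success l \<omega>} \<le> k" by (intro Max.boundedI) auto
  then show ?thesis using True recv_mono by (simp add: latest_gen_def)
next
  case False
  then show ?thesis using recv_ge_n[of k] unfolding latest_gen_def if_not_P[OF False] by simp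
qed

lemma mp_aoi_nonneg: "0 \<le> t \<Longrightarrow> 0 \<le> mp_aoi \<delta> n N X \<omega> t"
proof (cases "t < recv 0")
  case False
  then obtain k where "recv k \<le> t" "t < recv (Suc k)" using recv_bracket by (metis not_less)
  then show ?thesis
    using latest_gen_le[of k \<omega>] n_pos by (simp add: mp_aoi_def mp_latest_gen_eq_latest_gen)
qed (simp add: mp_aoi_def mp_latest_gen_before_recv_0)

lemma has_integral_aoi_area:
  "(mp_aoi \<delta> n N X \<omega> has_integral aoi_area k \<omega>) {recv k..recv (Suc k)}"
proof -
  have "((\<lambda>t. t - latest_gen k \<omega>) has_integral
      (((recv (Suc k))\<^sup>2 - (recv k)\<^sup>2) / 2 - latest_gen k \<omega> * (recv (Suc k) - recv k))) {recv k..recv (Suc k)}"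
    by (rule has_integral_minus_const) (simp add: recv_mono)
  also have "((recv (Suc k))\<^sup>2 - (recv k)\<^sup>2) / 2 - latest_gen k \<omega> * (recv (Suc k) - recv k) = aoi_area k \<omega>"
    by (simp add: aoi_area_def recv_Suc power2_eq_square algebra_simps)
  finally have "((\<lambda>t. t - latest_gen k \<omega>) has_integral aoi_area k \<omega>) {recv k..recv (Suc k)}" .
  then show ?thesis
    by (rule has_integral_spike_finite[where S = "{recv (Suc k)}", rotated 2])
       (auto simp: mp_aoi_def mp_latest_gen_eq_latest_gen)
qed

lemma has_integral_aoi_initial: "(mp_aoi \<delta> n N X \<omega> has_integral (real n)\<^sup>2 / 2) {0..recv 0}"
proof -
  have "((\<lambda>t. t - 0) has_integral (((recv 0)\<^sup>2 - 0\<^sup>2) / 2 - 0 * (recv 0 - 0))) {0..recv 0}"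
    by (rule has_integral_minus_const) (simp add: recv_0)
  then have "((\<lambda>t. t - 0) has_integral (real n)\<^sup>2 / 2) {0..recv 0}"
    by (simp add: recv_0)
  then show ?thesis
    by (rule has_integral_spike_finite[where S = "{recv 0}", rotated 2])
       (auto simp: mp_aoi_def mp_latest_gen_before_recv_0)
qed

lemma has_integral_aoi_upto_recv:
  "(mp_aoi \<delta> n N X \<omega> has_integral ((real n)\<^sup>2 / 2 + (\<Sum>k<K. aoi_area k \<omega>))) {0..recv K}"
proof (induction K)
  case (Suc K)
  have "(mp_aoi \<delta> n N X \<omega> has_integral (((real n)\<^sup>2 / 2 + (\<Sum>k<K. aoi_area k \<omega>)) + aoi_area K \<omega>))
      {0..recv (Suc K)}"
    by (rule has_integral_combine[OF _ _ Suc.IH has_integral_aoi_area])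
       (use recv_ge_n[of K] n_pos recv_mono[of K "Suc K"] in auto)
  then show ?case by (simp add: algebra_simps)
qed (simp add: has_integral_aoi_initial)

lemma mp_aoi_integrable: "0 \<le> T \<Longrightarrow> mp_aoi \<delta> n N X \<omega> integrable_on {0..T}"
proof -
  assume "0 \<le> T"
  obtain K where "T < recv K" using recv_unbounded by blast
  have "mp_aoi \<delta> n N X \<omega> integrable_on {0..recv K}"
    using has_integral_aoi_upto_recv by blast
  then show ?thesis by (rule integrable_subinterval_real) (use \<open>T < recv K\<close> in auto)
qed

lemma aoi_integral_nonneg: "0 \<le> T \<Longrightarrow> 0 \<le> aoi_integral \<omega> T"
  unfolding aoi_integral_def
  by (rule integral_nonneg[OF mp_aoi_integrable]) (auto intro: mp_aoi_nonneg)

lemma aoi_integral_mono: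
  assumes "0 \<le> a" "a \<le> b"
  shows "aoi_integral \<omega> a \<le> aoi_integral \<omega> b"
proof -
  have int_b: "mp_aoi \<delta> n N X \<omega> integrable_on {0..b}" using mp_aoi_integrable assms by simp
  have "0 \<le> integral {a..b} (mp_aoi \<delta> n N X \<omega>)"
    by (rule integral_nonneg[OF integrable_subinterval_real[OF int_b]])
       (use assms in \<open>auto intro: mp_aoi_nonneg\<close>)
  then show ?thesis
    using Henstock_Kurzweil_Integration.integral_combine[OF assms int_b]
    unfolding aoi_integral_def by linarith
qed

lemma aoi_integral_recv:
  "aoi_integral \<omega> (recv K) = (real n)\<^sup>2 / 2 + (\<Sum>k<K. aoi_area k \<omega>)"
  unfolding aoi_integral_def by (rule integral_unique[OF has_integral_aoi_upto_recv])

lemma trailing_failures_iff: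
  assumes "\<exists>l\<le>k. success l \<omega>" "1 \<le> j" "j \<le> k"
  shows "(\<forall>l\<in>{Suc k - j..k}. \<not> success l \<omega>) \<longleftrightarrow> j \<le> k - Max {l. l \<le> k \<and> success l \<omega>}"
proof -
  let ?L = "Max {l. l \<le> k \<and> success l \<omega>}"
  have L: "?L \<le> k" "success ?L \<omega>"
    using Max_in[of "{l. l \<le> k \<and> success l \<omega>}"] assms(1) by auto
  have below_L: "l \<le> ?L" if "l \<le> k" "success l \<omega>" for l
    using Max_ge[of "{l. l \<le> k \<and> success l \<omega>}" l] that by auto
  show ?thesis
  proof
    assume "\<forall>l\<in>{Suc k - j..k}. \<not> success l \<omega>"
    then have "?L \<notin> {Suc k - j..k}" using L by blast
    then show "j \<le> k - ?L" using L assms(2,3) by auto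
  next
    assume "j \<le> k - ?L"
    then show "\<forall>l\<in>{Suc k - j..k}. \<not> success l \<omega>" using below_L L assms(2,3) by fastforce
  qed
qed

text \<open>Once some transmission has succeeded, the area no longer depends on the initial phase.\<close>

lemma aoi_area_eq_via_outage:
  assumes "success s \<omega>" "s \<le> k"
  shows "aoi_area k \<omega> = aoi_area_via_outage k \<omega>"
proof -
  let ?L = "Max {l. l \<le> k \<and> success l \<omega>}"
  have some: "\<exists>l\<le>k. success l \<omega>" using assms by auto
  have L_le: "?L \<le> k" using Max_in[of "{l. l \<le> k \<and> success l \<omega>}"] some by auto
  have "outage k \<omega> = (\<Sum>j\<in>{1..k}. gap (k - j) * of_bool (j \<le> k - ?L))"
    unfolding outage_def by (intro sum.cong refl) (simp add: trailing_failures_iff[OF some])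
  also have "\<dots> = (\<Sum>j\<in>{1..k - ?L}. gap (k - j))"
    by (rule sum.mono_neutral_cong_right) (use L_le in auto)
  also have "\<dots> = (\<Sum>l\<in>{?L..<k}. gap l)"
    by (rule sum.reindex_bij_witness[where i = "\<lambda>l. k - l" and j = "\<lambda>j. k - j"]) (use L_le in auto)
  also have "\<dots> = recv k - recv ?L" using recv_diff[OF L_le] by simp
  finally have "recv k - latest_gen k \<omega> = real n + outage k \<omega>"
    using some by (simp add: latest_gen_def)
  then show ?thesis
    by (simp add: aoi_area_def aoi_area_via_outage_def power2_eq_square algebra_simps)
qed

lemma aoi_integral_recv_via_outage:
  assumes "success s \<omega>" "s \<le> K"
  shows "aoi_integral \<omega> (recv K)
           = ((real n)\<^sup>2 / 2 + (\<Sum>k<s. aoi_area k \<omega> - aoi_area_via_outage k \<omega>))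
             + (\<Sum>k<K. aoi_area_via_outage k \<omega>)"
proof -
  have "(\<Sum>k<K. aoi_area k \<omega> - aoi_area_via_outage k \<omega>) = (\<Sum>k<s. aoi_area k \<omega> - aoi_area_via_outage k \<omega>)"
    by (rule sum.mono_neutral_right) (use assms aoi_area_eq_via_outage[OF assms(1)] in auto)
  then show ?thesis unfolding aoi_integral_recv by (simp add: sum_subtractf)
qed

section \<open>Decomposing the AoI area\<close>

text \<open>The term of lag j in the expansion of gap k * outage k.\<close>

definition lag_term :: "nat \<Rightarrow> nat \<Rightarrow> 'a \<Rightarrow> real" where
  "lag_term k j \<omega> = gap k * gap (k - j) * of_bool (\<forall>l\<in>{Suc k - j..k}. \<not> success l \<omega>)"

definition outage_sum :: "nat \<Rightarrow> 'a \<Rightarrow> real" where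
  "outage_sum K \<omega> = (\<Sum>k<K. gap k * outage k \<omega>)"

definition gap_autocorr :: "nat \<Rightarrow> real" where
  "gap_autocorr j = (\<Sum>i<N. gap i * gap (i + j))"

lemma sum_aoi_area_via_outage:
  "(\<Sum>k<K. aoi_area_via_outage k \<omega>) = (\<Sum>k<K. gap k * (real n + gap k / 2)) + outage_sum K \<omega>"
  by (simp add: aoi_area_via_outage_def outage_sum_def sum.distrib)

lemma outage_sum_eq_sum_lag_term:
  "outage_sum K \<omega> = (\<Sum>j\<in>{1..K}. \<Sum>k\<in>{j..<K}. lag_term k j \<omega>)"
proof -
  have "outage_sum K \<omega> = (\<Sum>k<K. \<Sum>j\<in>{j. j \<in> {1..K} \<and> j \<le> k}. lag_term k j \<omega>)"
    unfolding outage_sum_def outage_def lag_term_def sum_distrib_left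
    by (intro sum.cong refl) (auto simp: mult.assoc intro!: sum.cong)
  also have "\<dots> = (\<Sum>j\<in>{1..K}. \<Sum>k\<in>{k. k \<in> {..<K} \<and> j \<le> k}. lag_term k j \<omega>)"
    by (rule sum.swap_restrict) auto
  also have "\<dots> = (\<Sum>j\<in>{1..K}. \<Sum>k\<in>{j..<K}. lag_term k j \<omega>)"
    by (intro sum.cong refl) auto
  finally show ?thesis .
qed

lemma sum_gap_area_periods:
  "(\<Sum>k<m * N. gap k * (real n + gap k / 2)) = real m * ((real n)\<^sup>2 + gap_autocorr 0 / 2)"
proof -
  have "(\<Sum>k<m * N. gap k * (real n + gap k / 2)) = real m * (\<Sum>i<N. gap i * (real n + gap i / 2))"
    by (rule sum_lessThan_periodic) (simp add: gap_add_N)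
  also have "(\<Sum>i<N. gap i * (real n + gap i / 2)) = real n * (\<Sum>i<N. gap i) + gap_autocorr 0 / 2"
    by (simp add: gap_autocorr_def algebra_simps sum.distrib sum_distrib_left sum_divide_distrib)
  also have "(\<Sum>i<N. gap i) = real n"
    using sum_mp_T by (simp add: gap_def)
  finally show ?thesis by (simp add: power2_eq_square)
qed

lemma gap_autocorr_bound: "\<bar>gap_autocorr j\<bar> \<le> real N * (real n)\<^sup>2"
proof -
  have "\<bar>gap_autocorr j\<bar> \<le> (\<Sum>i<N. \<bar>gap i * gap (i + j)\<bar>)"
    unfolding gap_autocorr_def by (rule sum_abs)
  also have "\<dots> \<le> (\<Sum>i<N. (real n)\<^sup>2)"
    by (rule sum_mono) (use gap_nonneg gap_le in \<open>auto simp: power2_eq_square intro!: mult_mono\<close>)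
  finally show ?thesis by simp
qed

lemma gap_autocorr_add_N: "gap_autocorr (j + N) = gap_autocorr j"
  unfolding gap_autocorr_def by (intro sum.cong refl) (metis add.assoc gap_add_N)

lemma gap_autocorr_N_minus:
  assumes "j < N"
  shows "gap_autocorr (N - j) = gap_autocorr j"
proof -
  have "gap_autocorr (N - j) = (\<Sum>i<N. gap ((i + j) mod N) * gap ((i + j) mod N + (N - j)))"
    unfolding gap_autocorr_def
    using sum_rotate_mod[OF N_pos, of "\<lambda>i. gap i * gap (i + (N - j))" j] by simp
  also have "\<dots> = (\<Sum>i<N. gap (i + j) * gap i)"
  proof (intro sum.cong refl)
    fix i assume "i \<in> {..<N}"
    then have "((j + i) mod N + N - j) mod N = i" using mod_add_diff_cancel[OF assms] by simp
    then have "gap ((i + j) mod N + (N - j)) = gap i"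
      using assms by (metis gap_mod add.commute Nat.add_diff_assoc less_imp_le)
    then show "gap ((i + j) mod N) * gap ((i + j) mod N + (N - j)) = gap (i + j) * gap i"
      by (simp add: gap_mod)
  qed
  finally show ?thesis by (simp add: gap_autocorr_def mult.commute)
qed

text \<open>The error comes from the j products that run past the end of the last period.\<close>

lemma sum_lag_products_periods:
  "\<bar>(\<Sum>k\<in>{j..<m * N}. gap k * gap (k - j)) - real m * gap_autocorr j\<bar> \<le> real j * (real n)\<^sup>2"
proof -
  define g where "g k = gap k * gap (k + j)" for k
  have g_bounds: "0 \<le> g k" "g k \<le> (real n)\<^sup>2" for k
    unfolding g_def using gap_nonneg gap_le by (auto simp: power2_eq_square intro!: mult_mono)
  have "g (k + N) = g k" for k
    unfolding g_def by (metis gap_add_N add.commute add.left_commute)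
  then have full: "(\<Sum>k<m * N. g k) = real m * gap_autocorr j"
    using sum_lessThan_periodic[of g N m] by (simp add: gap_autocorr_def g_def)
  have shifted: "(\<Sum>k\<in>{j..<m * N}. gap k * gap (k - j)) = (\<Sum>k<m * N - j. g k)"
  proof (cases "j \<le> m * N")
    case True
    have "(\<Sum>k\<in>{0 + j..<(m * N - j) + j}. gap k * gap (k - j)) = (\<Sum>k\<in>{0..<m * N - j}. gap (k + j) * gap k)"
      by (subst sum.shift_bounds_nat_ivl) simp
    then show ?thesis using True by (simp add: g_def lessThan_atLeast0 mult.commute)
  qed simp
  have "{..<m * N} = {..<m * N - j} \<union> {m * N - j..<m * N}" by auto
  then have split: "(\<Sum>k<m * N. g k) = (\<Sum>k<m * N - j. g k) + (\<Sum>k\<in>{m * N - j..<m * N}. g k)"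
    by (simp add: sum.union_disjoint ivl_disj_int)
  have "0 \<le> (\<Sum>k\<in>{m * N - j..<m * N}. g k)" by (rule sum_nonneg) (simp add: g_bounds)
  moreover have "(\<Sum>k\<in>{m * N - j..<m * N}. g k) \<le> real j * (real n)\<^sup>2"
  proof -
    have "(\<Sum>k\<in>{m * N - j..<m * N}. g k) \<le> real (card {m * N - j..<m * N}) * (real n)\<^sup>2"
      using sum_bounded_above[of "{m * N - j..<m * N}" g "(real n)\<^sup>2"] g_bounds by simp
    also have "\<dots> \<le> real j * (real n)\<^sup>2"
      by (intro mult_right_mono) (simp_all only: card_atLeastLessThan of_nat_le_iff, auto)
    finally show ?thesis .
  qed
  ultimately show ?thesis using full shifted split by (auto simp: abs_le_iff)
qed

section \<open>A strong law for the outage sum\<close>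

lemma measurable_lag_term[measurable]: "lag_term k j \<in> borel_measurable M"
  unfolding lag_term_def by measurable

lemma lag_term_nonneg: "0 \<le> lag_term k j \<omega>"
  by (simp add: lag_term_def gap_nonneg)

lemma lag_term_le: "lag_term k j \<omega> \<le> (real n)\<^sup>2"
proof -
  have "gap k * gap (k - j) \<le> real n * real n"
    using gap_nonneg gap_le by (intro mult_mono) auto
  then show ?thesis using gap_nonneg[of k] gap_nonneg[of "k - j"]
    by (auto simp: lag_term_def power2_eq_square)
qed

lemma expectation_lag_term:
  assumes "j \<le> k"
  shows "expectation (lag_term k j) = gap k * gap (k - j) * \<epsilon> ^ j"
proof -
  have "expectation (lag_term k j)
      = gap k * gap (k - j) * expectation (indicator {\<omega> \<in> space M. \<forall>l\<in>{Suc k - j..k}. \<not> success l \<omega>})"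
    unfolding lag_term_def
    by (subst integral_mult_right_zero[symmetric])
       (rule Bochner_Integration.integral_cong, auto simp: indicator_def)
  then show ?thesis using assms by (simp add: prob_failures)
qed

text \<open>Along one residue class modulo j the failure windows of length j are disjoint.\<close>

lemma indep_vars_lag_term:
  assumes "0 < j" and mod_eq: "\<And>k k'. k \<in> C \<Longrightarrow> k' \<in> C \<Longrightarrow> k mod j = k' mod j"
  shows "indep_vars (\<lambda>_. borel) (\<lambda>k. lag_term k j) C"
proof -
  define W where "W k = {Suc k - j..k}" for k
  have "disjoint_family_on W C"
    unfolding disjoint_family_on_def
  proof (intro ballI impI)
    fix k k' assume "k \<in> C" "k' \<in> C" "k \<noteq> k'"
    then have "k + j \<le> k' \<or> k' + j \<le> k"
      using mod_eq_less_imp_add_le[OF \<open>0 < j\<close>] mod_eq by (metis linorder_neqE_nat)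
    then show "W k \<inter> W k' = {}" by (auto simp: W_def)
  qed
  with indep_vars_restrict[OF indep_vars_success]
  have "indep_vars (\<lambda>k. PiM (W k) (\<lambda>_. count_space UNIV)) (\<lambda>k \<omega>. restrict (\<lambda>l. success l \<omega>) (W k)) C"
    by simp
  then have "indep_vars (\<lambda>_. borel)
      (\<lambda>k \<omega>. (\<lambda>g. gap k * gap (k - j) * of_bool (\<forall>l\<in>W k. \<not> g l)) (restrict (\<lambda>l. success l \<omega>) (W k))) C"
    by (rule indep_vars_compose2) (simp add: W_def, measurable)
  then show ?thesis
    by (rule indep_vars_cong[THEN iffD1, rotated -1]) (auto simp: lag_term_def W_def)
qed

lemma prob_lag_sum_deviation:
  assumes "0 < j" "\<And>k. k \<in> C \<Longrightarrow> j \<le> k"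
    and "\<And>k k'. k \<in> C \<Longrightarrow> k' \<in> C \<Longrightarrow> k mod j = k' mod j"
    and "finite C" "card C \<le> K" "0 < t"
  shows "prob {\<omega> \<in> space M. t \<le> \<bar>(\<Sum>k\<in>C. lag_term k j \<omega>) - (\<Sum>k\<in>C. gap k * gap (k - j) * \<epsilon> ^ j)\<bar>}
         \<le> 2 * exp (- 2 * t\<^sup>2 / (real K * (real n) ^ 4))"
proof (cases "C = {}")
  case False
  have hoeffding: "Hoeffding_ineq M C (\<lambda>k. lag_term k j) (\<lambda>_. 0) (\<lambda>_. (real n)\<^sup>2)"
    unfolding Hoeffding_ineq_def indep_interval_bounded_random_variables_def
      indep_interval_bounded_random_variables_axioms_def
    using indep_vars_lag_term[OF assms(1,3)] assms(4) lag_term_nonneg lag_term_le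
    by (auto intro: prob_space_axioms)
  have card_pos: "0 < card C" using False assms(4) by (simp add: card_gt_0_iff)
  have "(\<Sum>k\<in>C. expectation (lag_term k j)) = (\<Sum>k\<in>C. gap k * gap (k - j) * \<epsilon> ^ j)"
    by (rule sum.cong) (auto simp: expectation_lag_term assms(2))
  moreover have "(\<Sum>k\<in>C. ((real n)\<^sup>2 - 0)\<^sup>2) = real (card C) * (real n) ^ 4" by simp
  ultimately have "prob {\<omega> \<in> space M. t \<le> \<bar>(\<Sum>k\<in>C. lag_term k j \<omega>) - (\<Sum>k\<in>C. gap k * gap (k - j) * \<epsilon> ^ j)\<bar>}
      \<le> 2 * exp (- 2 * t\<^sup>2 / (real (card C) * (real n) ^ 4))"
    using Hoeffding_ineq.Hoeffding_ineq_abs_ge[OF hoeffding, of t] assms(6) card_pos n_pos by simp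
  also have "\<dots> \<le> 2 * exp (- 2 * t\<^sup>2 / (real K * (real n) ^ 4))"
    using assms(5,6) card_pos n_pos by (simp add: frac_le mult_right_mono)
  finally show ?thesis .
qed (use assms in simp)

text \<open>At stage p we look at (p + 1)^8 periods, lags up to p + 1 and deviations up to (p + 1)^5:
  the Hoeffding bound for a residue class is then geometric in p, while the accumulated
  deviation (p + 1)^2 (p + 1)^5 is still negligible against (p + 1)^8.\<close>

definition epochs :: "nat \<Rightarrow> nat" where
  "epochs p = Suc p ^ 8"

definition horizon :: "nat \<Rightarrow> nat" where
  "horizon p = epochs p * N"

definition dev_bound :: "nat \<Rightarrow> real" where
  "dev_bound p = real (Suc p ^ 5)"

definition residue_block :: "nat \<Rightarrow> nat \<Rightarrow> nat \<Rightarrow> nat set" where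
  "residue_block p j \<rho> = {k \<in> {j..<horizon p}. k mod j = \<rho>}"

definition block_deviation :: "nat \<Rightarrow> nat \<Rightarrow> nat \<Rightarrow> 'a \<Rightarrow> real" where
  "block_deviation p j \<rho> \<omega> =
     (\<Sum>k\<in>residue_block p j \<rho>. lag_term k j \<omega>) - (\<Sum>k\<in>residue_block p j \<rho>. gap k * gap (k - j) * \<epsilon> ^ j)"

definition long_outage :: "nat \<Rightarrow> 'a set" where
  "long_outage p = (\<Union>k\<in>{Suc (Suc p)..<horizon p}.
     {\<omega> \<in> space M. \<forall>l\<in>{Suc k - Suc (Suc p)..k}. \<not> success l \<omega>})"

definition large_deviation :: "nat \<Rightarrow> 'a set" where
  "large_deviation p = (\<Union>j\<in>{1..Suc p}. \<Union>\<rho>\<in>{..<j}.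
     {\<omega> \<in> space M. dev_bound p \<le> \<bar>block_deviation p j \<rho> \<omega>\<bar>})"

definition bad_event :: "nat \<Rightarrow> 'a set" where
  "bad_event p = long_outage p \<union> large_deviation p"

definition outage_sum_mean :: "nat \<Rightarrow> real" where
  "outage_sum_mean p = (\<Sum>j\<in>{1..Suc p}. \<Sum>k\<in>{j..<horizon p}. gap k * gap (k - j) * \<epsilon> ^ j)"

definition outage_limit :: real where
  "outage_limit = (\<Sum>l. \<epsilon> ^ Suc l * gap_autocorr (Suc l))"

lemma measurable_block_deviation[measurable]: "block_deviation p j \<rho> \<in> borel_measurable M"
  unfolding block_deviation_def by measurable

lemma sets_long_outage[measurable]: "long_outage p \<in> sets M"
  unfolding long_outage_def by measurable

lemma sets_large_deviation[measurable]: "large_deviation p \<in> sets M"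
  unfolding large_deviation_def by measurable

lemma sets_bad_event[measurable]: "bad_event p \<in> sets M"
  unfolding bad_event_def by measurable

lemma prob_long_outage: "prob (long_outage p) \<le> real (horizon p) * \<epsilon> ^ Suc (Suc p)"
proof -
  have "prob (long_outage p)
      \<le> (\<Sum>k\<in>{Suc (Suc p)..<horizon p}. prob {\<omega> \<in> space M. \<forall>l\<in>{Suc k - Suc (Suc p)..k}. \<not> success l \<omega>})"
    unfolding long_outage_def by (rule measure_UNION_le) auto
  also have "\<dots> = (\<Sum>k\<in>{Suc (Suc p)..<horizon p}. \<epsilon> ^ Suc (Suc p))"
    by (intro sum.cong refl) (simp add: prob_failures)
  also have "\<dots> \<le> real (horizon p) * \<epsilon> ^ Suc (Suc p)"
    using eps_pos by (simp add: mult_right_mono)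
  finally show ?thesis .
qed

lemma hoeffding_bound_le_geometric:
  "exp (- 2 * (dev_bound p)\<^sup>2 / (real (horizon p) * (real n) ^ 4))
     \<le> exp (- 2 / (real N * (real n) ^ 4)) ^ Suc p"
proof -
  define c where "c = 2 / (real N * (real n) ^ 4)"
  have "0 \<le> c" by (simp add: c_def)
  have "(dev_bound p)\<^sup>2 = real (Suc p) ^ 8 * (real (Suc p) * real (Suc p))"
    by (simp add: dev_bound_def flip: power_add power_mult power2_eq_square)
  then have "2 * (dev_bound p)\<^sup>2 / (real (horizon p) * (real n) ^ 4) = real (Suc p) * (real (Suc p) * c)"
    using n_pos N_pos by (simp add: horizon_def epochs_def c_def field_simps)
  also have "\<dots> \<ge> real (Suc p) * c"
    using \<open>0 \<le> c\<close> by (intro mult_left_mono) (auto simp: mult_le_cancel_right1)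
  finally have "- 2 * (dev_bound p)\<^sup>2 / (real (horizon p) * (real n) ^ 4) \<le> real (Suc p) * - c"
    by simp
  then have "exp (- 2 * (dev_bound p)\<^sup>2 / (real (horizon p) * (real n) ^ 4)) \<le> exp (real (Suc p) * - c)"
    by (rule exp_mono)
  also have "\<dots> = exp (- c) ^ Suc p" by (rule exp_of_nat_mult)
  finally show ?thesis by (simp add: c_def)
qed

lemma prob_large_deviation:
  "prob (large_deviation p) \<le> real (Suc p) ^ 2 * (2 * exp (- 2 / (real N * (real n) ^ 4)) ^ Suc p)"
proof -
  let ?b = "2 * exp (- 2 / (real N * (real n) ^ 4)) ^ Suc p"
  have class_bound: "prob {\<omega> \<in> space M. dev_bound p \<le> \<bar>block_deviation p j \<rho> \<omega>\<bar>} \<le> ?b"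
    if "j \<in> {1..Suc p}" for j \<rho>
  proof -
    have "card (residue_block p j \<rho>) \<le> horizon p"
      using card_mono[of "{..<horizon p}" "residue_block p j \<rho>"] by (auto simp: residue_block_def)
    then have "prob {\<omega> \<in> space M. dev_bound p \<le> \<bar>block_deviation p j \<rho> \<omega>\<bar>}
        \<le> 2 * exp (- 2 * (dev_bound p)\<^sup>2 / (real (horizon p) * (real n) ^ 4))"
      unfolding block_deviation_def using that
      by (intro prob_lag_sum_deviation) (auto simp: residue_block_def dev_bound_def)
    also have "\<dots> \<le> ?b" using hoeffding_bound_le_geometric[of p] by simp
    finally show ?thesis .
  qed
  have "prob (large_deviation p)
      \<le> (\<Sum>j\<in>{1..Suc p}. \<Sum>\<rho><j. prob {\<omega> \<in> space M. dev_bound p \<le> \<bar>block_deviation p j \<rho> \<omega>\<bar>})"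
    unfolding large_deviation_def
    by (rule order_trans[OF measure_UNION_le sum_mono[OF measure_UNION_le]]) auto
  also have "\<dots> \<le> (\<Sum>j\<in>{1..Suc p}. \<Sum>\<rho><j. ?b)"
    by (intro sum_mono class_bound) auto
  also have "\<dots> \<le> (\<Sum>j\<in>{1..Suc p}. real (Suc p) * ?b)"
    by (intro sum_mono mult_right_mono) auto
  also have "\<dots> = real (Suc p) ^ 2 * ?b" by (simp add: power2_eq_square)
  finally show ?thesis .
qed

lemma AE_eventually_good:
  "AE \<omega> in M. eventually (\<lambda>p. \<omega> \<in> space M - bad_event p) sequentially"
proof (rule borel_cantelli_AE1)
  define q where "q = exp (- 2 / (real N * (real n) ^ 4))"
  have q: "0 \<le> q" "q < 1" using n_pos N_pos by (auto simp: q_def)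
  have summable_power_Suc: "summable (\<lambda>p. real (Suc p) ^ k * r ^ Suc p)" if "0 \<le> r" "r < 1" for k r
    using summable_real_power_times_geometric[OF that, of k]
      summable_Suc_iff[of "\<lambda>p. real p ^ k * r ^ p"] by simp
  have "summable (\<lambda>p. real N * \<epsilon> * (real (Suc p) ^ 8 * \<epsilon> ^ Suc p) + 2 * (real (Suc p) ^ 2 * q ^ Suc p))"
    using summable_power_Suc[of \<epsilon> 8] summable_power_Suc[OF q, of 2] eps_pos eps_lt_1
    by (intro summable_add summable_mult) auto
  then show "summable (\<lambda>p. measure M (bad_event p))"
  proof (rule summable_comparison_test[rotated], intro exI allI impI)
    fix p :: nat
    have "measure M (bad_event p) \<le> prob (long_outage p) + prob (large_deviation p)"
      unfolding bad_event_def by (rule measure_Un_le) auto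
    also have "\<dots> \<le> real N * \<epsilon> * (real (Suc p) ^ 8 * \<epsilon> ^ Suc p) + 2 * (real (Suc p) ^ 2 * q ^ Suc p)"
      using prob_long_outage[of p] prob_large_deviation[of p]
      by (simp add: q_def horizon_def epochs_def algebra_simps)
    finally show "norm (measure M (bad_event p))
        \<le> real N * \<epsilon> * (real (Suc p) ^ 8 * \<epsilon> ^ Suc p) + 2 * (real (Suc p) ^ 2 * q ^ Suc p)"
      by simp
  qed
qed (auto simp: less_top[symmetric])

lemma outage_sum_horizon_truncated:
  assumes "\<omega> \<in> space M" "\<omega> \<notin> long_outage p"
  shows "outage_sum (horizon p) \<omega> = (\<Sum>j\<in>{1..Suc p}. \<Sum>k\<in>{j..<horizon p}. lag_term k j \<omega>)"
proof -
  let ?h = "\<lambda>j. \<Sum>k\<in>{j..<horizon p}. lag_term k j \<omega>"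
  have "?h j = 0" if "Suc p < j" for j
  proof (intro sum.neutral ballI)
    fix k assume k: "k \<in> {j..<horizon p}"
    have "k \<in> {Suc (Suc p)..<horizon p}" using k that by auto
    with assms obtain l where "l \<in> {Suc k - Suc (Suc p)..k}" "success l \<omega>"
      unfolding long_outage_def by blast
    then show "lag_term k j \<omega> = 0" using that by (auto simp: lag_term_def)
  qed
  then have "(\<Sum>j\<in>{1..horizon p}. ?h j) = (\<Sum>j\<in>{1..Suc p}. ?h j)"
    by (intro sum.mono_neutral_cong) auto
  then show ?thesis unfolding outage_sum_eq_sum_lag_term .
qed

lemma outage_sum_close_to_mean:
  assumes "\<omega> \<in> space M - bad_event p"
  shows "\<bar>outage_sum (horizon p) \<omega> - outage_sum_mean p\<bar> \<le> real (Suc p) ^ 7"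
proof -
  have small: "\<bar>block_deviation p j \<rho> \<omega>\<bar> \<le> dev_bound p" if "j \<in> {1..Suc p}" "\<rho> < j" for j \<rho>
  proof -
    have "\<not> dev_bound p \<le> \<bar>block_deviation p j \<rho> \<omega>\<bar>"
      using assms that unfolding bad_event_def large_deviation_def by blast
    then show ?thesis by simp
  qed
  have split_classes: "(\<Sum>k\<in>{j..<horizon p}. f k) = (\<Sum>\<rho><j. \<Sum>k\<in>residue_block p j \<rho>. f k)"
    if "1 \<le> j" for j and f :: "nat \<Rightarrow> real"
    unfolding residue_block_def by (rule sum.group[symmetric]) (use that in auto)
  have "outage_sum (horizon p) \<omega> = (\<Sum>j\<in>{1..Suc p}. \<Sum>k\<in>{j..<horizon p}. lag_term k j \<omega>)"
    using assms by (intro outage_sum_horizon_truncated) (auto simp: bad_event_def)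
  then have "outage_sum (horizon p) \<omega> - outage_sum_mean p
      = (\<Sum>j\<in>{1..Suc p}. (\<Sum>k\<in>{j..<horizon p}. lag_term k j \<omega>)
                           - (\<Sum>k\<in>{j..<horizon p}. gap k * gap (k - j) * \<epsilon> ^ j))"
    by (simp only: outage_sum_mean_def sum_subtractf)
  also have "\<dots> = (\<Sum>j\<in>{1..Suc p}. \<Sum>\<rho><j. block_deviation p j \<rho> \<omega>)"
    by (intro sum.cong refl) (simp add: split_classes block_deviation_def sum_subtractf)
  finally have "\<bar>outage_sum (horizon p) \<omega> - outage_sum_mean p\<bar>
      = \<bar>\<Sum>j\<in>{1..Suc p}. \<Sum>\<rho><j. block_deviation p j \<rho> \<omega>\<bar>" by simp
  also have "\<dots> \<le> (\<Sum>j\<in>{1..Suc p}. \<Sum>\<rho><j. \<bar>block_deviation p j \<rho> \<omega>\<bar>)"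
    by (rule order_trans[OF sum_abs sum_mono[OF sum_abs]])
  also have "\<dots> \<le> (\<Sum>j\<in>{1..Suc p}. \<Sum>\<rho><j. dev_bound p)"
    by (intro sum_mono small) auto
  also have "\<dots> \<le> (\<Sum>j\<in>{1..Suc p}. real (Suc p) * dev_bound p)"
    by (intro sum_mono mult_right_mono) (auto simp: dev_bound_def)
  also have "\<dots> = real (Suc p) ^ 7" by (simp add: dev_bound_def del: of_nat_Suc flip: power_Suc)
  finally show ?thesis .
qed

lemma outage_sum_mean_close:
  "\<bar>outage_sum_mean p - real (epochs p) * (\<Sum>j\<in>{1..Suc p}. \<epsilon> ^ j * gap_autocorr j)\<bar>
     \<le> real (Suc p) ^ 2 * (real n)\<^sup>2"
proof -
  let ?L = "\<lambda>j. \<Sum>k\<in>{j..<epochs p * N}. gap k * gap (k - j)"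
  have "outage_sum_mean p = (\<Sum>j\<in>{1..Suc p}. ?L j * \<epsilon> ^ j)"
    by (simp only: outage_sum_mean_def horizon_def sum_distrib_right)
  moreover have "real (epochs p) * (\<Sum>j\<in>{1..Suc p}. \<epsilon> ^ j * gap_autocorr j)
      = (\<Sum>j\<in>{1..Suc p}. (real (epochs p) * gap_autocorr j) * \<epsilon> ^ j)"
    unfolding sum_distrib_left by (intro sum.cong refl) (simp only: mult_ac)
  ultimately have "\<bar>outage_sum_mean p - real (epochs p) * (\<Sum>j\<in>{1..Suc p}. \<epsilon> ^ j * gap_autocorr j)\<bar>
      = \<bar>\<Sum>j\<in>{1..Suc p}. (?L j - real (epochs p) * gap_autocorr j) * \<epsilon> ^ j\<bar>"
    by (simp only: sum_subtractf[symmetric] left_diff_distrib)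
  also have "\<dots> \<le> (\<Sum>j\<in>{1..Suc p}. \<bar>(?L j - real (epochs p) * gap_autocorr j) * \<epsilon> ^ j\<bar>)"
    by (rule sum_abs)
  also have "\<dots> = (\<Sum>j\<in>{1..Suc p}. \<bar>?L j - real (epochs p) * gap_autocorr j\<bar> * \<epsilon> ^ j)"
    using eps_pos by (simp add: abs_mult)
  also have "\<dots> \<le> (\<Sum>j\<in>{1..Suc p}. real (Suc p) * (real n)\<^sup>2 * 1)"
  proof (rule sum_mono)
    fix j assume "j \<in> {1..Suc p}"
    then have "real j * (real n)\<^sup>2 \<le> real (Suc p) * (real n)\<^sup>2"
      by (intro mult_right_mono) auto
    then have "\<bar>?L j - real (epochs p) * gap_autocorr j\<bar> \<le> real (Suc p) * (real n)\<^sup>2"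
      using sum_lag_products_periods[of j "epochs p"] by linarith
    moreover have "\<epsilon> ^ j \<le> 1" using eps_pos eps_lt_1 by (simp add: power_le_one)
    ultimately show "\<bar>?L j - real (epochs p) * gap_autocorr j\<bar> * \<epsilon> ^ j \<le> real (Suc p) * (real n)\<^sup>2 * 1"
      using eps_pos by (intro mult_mono) auto
  qed
  also have "\<dots> = real (Suc p) ^ 2 * (real n)\<^sup>2" by (simp add: power2_eq_square)
  finally show ?thesis .
qed

lemma summable_outage_series: "summable (\<lambda>l. \<epsilon> ^ Suc l * gap_autocorr (Suc l))"
proof -
  have "\<bar>\<epsilon> * gap_autocorr (Suc l)\<bar> \<le> real N * (real n)\<^sup>2" for l
    using gap_autocorr_bound[of "Suc l"] eps_pos eps_lt_1
      mult_left_le_one_le[of "\<bar>gap_autocorr (Suc l)\<bar>" \<epsilon>]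
    by (simp add: abs_mult)
  from summable_geometric_times_bounded[OF this] show ?thesis
    by (simp add: mult_ac)
qed

lemma partial_sums_tendsto_outage_limit:
  "(\<lambda>p. \<Sum>j\<in>{1..Suc p}. \<epsilon> ^ j * gap_autocorr j) \<longlonglongrightarrow> outage_limit"
proof -
  have "(\<lambda>q. \<Sum>l<q. \<epsilon> ^ Suc l * gap_autocorr (Suc l)) \<longlonglongrightarrow> outage_limit"
    unfolding outage_limit_def by (rule summable_LIMSEQ[OF summable_outage_series])
  moreover have "(\<Sum>l<Suc p. \<epsilon> ^ Suc l * gap_autocorr (Suc l)) = (\<Sum>j\<in>{1..Suc p}. \<epsilon> ^ j * gap_autocorr j)" for p
    by (rule sum_bounds_lt_plus1)
  ultimately show ?thesis using LIMSEQ_Suc by fastforce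
qed

lemma AE_outage_sum_limit:
  "AE \<omega> in M. (\<lambda>p. outage_sum (horizon p) \<omega> / real (epochs p)) \<longlonglongrightarrow> outage_limit"
  using AE_eventually_good
proof eventually_elim
  case (elim \<omega>)
  define err where "err p = real (Suc p) ^ 7 / real (epochs p) + (real n)\<^sup>2 * (real (Suc p) ^ 2 / real (epochs p))"
    for p
  have "(\<lambda>p. real (Suc p) ^ 7 / real (epochs p)) \<longlonglongrightarrow> 0"
    "(\<lambda>p. real (Suc p) ^ 2 / real (epochs p)) \<longlonglongrightarrow> 0"
    unfolding epochs_def by real_asymp+
  then have "err \<longlonglongrightarrow> 0"
    unfolding err_def using tendsto_add[OF _ tendsto_mult_right_zero] by fastforce
  moreover have "\<forall>\<^sub>F p in sequentially.
      \<bar>outage_sum (horizon p) \<omega> / real (epochs p) - (\<Sum>j\<in>{1..Suc p}. \<epsilon> ^ j * gap_autocorr j)\<bar> \<le> err p"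
    using elim
  proof eventually_elim
    case (elim p)
    let ?S = "\<Sum>j\<in>{1..Suc p}. \<epsilon> ^ j * gap_autocorr j" and ?m = "real (epochs p)"
    have "0 < ?m" by (simp add: epochs_def)
    have "\<bar>outage_sum (horizon p) \<omega> - ?m * ?S\<bar> \<le> real (Suc p) ^ 7 + real (Suc p) ^ 2 * (real n)\<^sup>2"
      using outage_sum_close_to_mean[OF elim] outage_sum_mean_close[of p] by linarith
    then have "\<bar>outage_sum (horizon p) \<omega> - ?m * ?S\<bar> / ?m
        \<le> (real (Suc p) ^ 7 + real (Suc p) ^ 2 * (real n)\<^sup>2) / ?m"
      using \<open>0 < ?m\<close> by (rule divide_right_mono[OF _ less_imp_le])
    also have "\<dots> = err p" by (simp add: err_def add_divide_distrib)
    moreover have "outage_sum (horizon p) \<omega> / ?m - ?S = (outage_sum (horizon p) \<omega> - ?m * ?S) / ?m"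
      using \<open>0 < ?m\<close> by (simp add: field_simps)
    ultimately show ?case using \<open>0 < ?m\<close> by (simp add: abs_divide)
  qed
  ultimately show ?case
    by (rule tendsto_eventually_close[OF partial_sums_tendsto_outage_limit])
qed

section \<open>Identifying the limit\<close>

lemma outage_limit_eq:
  "outage_limit = (\<Sum>d<N. \<epsilon> ^ Suc d * gap_autocorr (Suc d)) / (1 - \<epsilon> ^ N)"
  unfolding outage_limit_def
proof (rule suminf_periodic_geometric[OF summable_outage_series N_pos])
  show "\<epsilon> ^ Suc (l + N) * gap_autocorr (Suc (l + N)) = \<epsilon> ^ N * (\<epsilon> ^ Suc l * gap_autocorr (Suc l))"
    for l using gap_autocorr_add_N[of "Suc l"] by (simp add: power_add)
qed (use eps_pos eps_power_N_less_1 in simp)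

lemma quad_form_eq_autocorr:
  "quad_form N (mp_M \<epsilon> N) (mp_T \<delta> n N) = (\<Sum>d<N. (\<epsilon> ^ d + \<epsilon> ^ (N - d)) * gap_autocorr d) / (1 - \<epsilon>)"
proof -
  have row: "(\<Sum>s<N. mp_T \<delta> n N a * mp_M \<epsilon> N a s * mp_T \<delta> n N s)
      = (\<Sum>d<N. gap a * mp_m \<epsilon> N d * gap (a + d))" if "a < N" for a
  proof -
    have "(\<Sum>s<N. mp_T \<delta> n N a * mp_M \<epsilon> N a s * mp_T \<delta> n N s)
        = (\<Sum>d<N. mp_T \<delta> n N a * mp_M \<epsilon> N a ((d + a) mod N) * mp_T \<delta> n N ((d + a) mod N))"
      using sum_rotate_mod[OF N_pos, of "\<lambda>s. mp_T \<delta> n N a * mp_M \<epsilon> N a s * mp_T \<delta> n N s" a] by simp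
    also have "\<dots> = (\<Sum>d<N. gap a * mp_m \<epsilon> N d * gap (a + d))"
    proof (intro sum.cong refl)
      fix d assume "d \<in> {..<N}"
      then have "mp_M \<epsilon> N a ((d + a) mod N) = mp_m \<epsilon> N d"
        unfolding mp_M_def using mod_add_diff_cancel[of a N d] that by (simp add: add.commute)
      then show "mp_T \<delta> n N a * mp_M \<epsilon> N a ((d + a) mod N) * mp_T \<delta> n N ((d + a) mod N)
          = gap a * mp_m \<epsilon> N d * gap (a + d)"
        using that by (simp add: gap_def add.commute)
    qed
    finally show ?thesis .
  qed
  have "quad_form N (mp_M \<epsilon> N) (mp_T \<delta> n N) = (\<Sum>a<N. \<Sum>d<N. gap a * mp_m \<epsilon> N d * gap (a + d))"
    unfolding quad_form_def by (intro sum.cong refl row) simp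
  also have "\<dots> = (\<Sum>d<N. mp_m \<epsilon> N d * gap_autocorr d)"
    unfolding gap_autocorr_def sum_distrib_left by (subst sum.swap) (simp add: mult_ac)
  finally show ?thesis
    unfolding mp_m_def by (simp add: sum_divide_distrib)
qed

text \<open>Both halves of the circulant weights reduce to the lags 1, ..., N: the second by the
  symmetry of the autocorrelation, the first after splitting off the lag 0.\<close>

lemma sum_eps_power_N_minus_autocorr:
  "(\<Sum>d<N. \<epsilon> ^ (N - d) * gap_autocorr d) = (\<Sum>d<N. \<epsilon> ^ Suc d * gap_autocorr (Suc d))"
proof -
  have "(\<Sum>d<N. \<epsilon> ^ (N - d) * gap_autocorr d) = (\<Sum>e\<in>{1..N}. \<epsilon> ^ e * gap_autocorr e)"
    by (rule sum.reindex_bij_witness[where i = "\<lambda>e. N - e" and j = "\<lambda>d. N - d"])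
       (auto simp: gap_autocorr_N_minus)
  then show ?thesis using sum_bounds_lt_plus1[of "\<lambda>e. \<epsilon> ^ e * gap_autocorr e" N] by simp
qed

lemma sum_eps_power_autocorr:
  "(\<Sum>d<N. \<epsilon> ^ d * gap_autocorr d)
     = (1 - \<epsilon> ^ N) * gap_autocorr 0 + (\<Sum>d<N. \<epsilon> ^ Suc d * gap_autocorr (Suc d))"
proof -
  have "(\<Sum>d<N. \<epsilon> ^ d * gap_autocorr d) + \<epsilon> ^ N * gap_autocorr N
      = gap_autocorr 0 + (\<Sum>d<N. \<epsilon> ^ Suc d * gap_autocorr (Suc d))"
    using sum.lessThan_Suc_shift[of "\<lambda>d. \<epsilon> ^ d * gap_autocorr d" N] by simp
  then show ?thesis using gap_autocorr_add_N[of 0] by (simp add: algebra_simps)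
qed

lemma aoi_limit_eq:
  "(1 - \<epsilon>) / (2 * real n * (1 - \<epsilon> ^ N)) * quad_form N (mp_M \<epsilon> N) (mp_T \<delta> n N) + real n
     = ((real n)\<^sup>2 + gap_autocorr 0 / 2 + outage_limit) / real n"
proof -
  define A where "A = (\<Sum>d<N. \<epsilon> ^ Suc d * gap_autocorr (Suc d))"
  have quad: "quad_form N (mp_M \<epsilon> N) (mp_T \<delta> n N) = ((1 - \<epsilon> ^ N) * gap_autocorr 0 + 2 * A) / (1 - \<epsilon>)"
    unfolding quad_form_eq_autocorr distrib_right sum.distrib sum_eps_power_autocorr
      sum_eps_power_N_minus_autocorr A_def by simp
  have "(d * P + 2 * A) / (2 * c * d) + c = (c\<^sup>2 + P / 2 + A / d) / c"
    if "d \<noteq> 0" "c \<noteq> 0" for d P c :: real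
    using that by (simp add: field_simps power2_eq_square)
  moreover have "1 - \<epsilon> \<noteq> 0" "1 - \<epsilon> ^ N \<noteq> 0" "real n \<noteq> 0"
    using eps_lt_1 eps_power_N_less_1 n_pos by auto
  ultimately show ?thesis
    unfolding quad outage_limit_eq A_def[symmetric] by simp
qed

lemma tendsto_aoi_integral_recv_horizon:
  assumes "success s \<omega>" and outage_lim: "(\<lambda>p. outage_sum (horizon p) \<omega> / real (epochs p)) \<longlonglongrightarrow> outage_limit"
  shows "(\<lambda>p. aoi_integral \<omega> (recv (horizon p)) / recv (horizon p))
           \<longlonglongrightarrow> ((real n)\<^sup>2 + gap_autocorr 0 / 2 + outage_limit) / real n"
proof -
  define B where "B = (real n)\<^sup>2 + gap_autocorr 0 / 2"
  define C where "C = (real n)\<^sup>2 / 2 + (\<Sum>k<s. aoi_area k \<omega> - aoi_area_via_outage k \<omega>)"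
  let ?m = "\<lambda>p. real (epochs p)"
  have ev: "eventually (\<lambda>p. aoi_integral \<omega> (recv (horizon p)) / recv (horizon p)
      = (C / ?m p + B + outage_sum (horizon p) \<omega> / ?m p) * (?m p / (?m p + 1)) / real n) sequentially"
    using eventually_ge_at_top[of s]
  proof eventually_elim
    case (elim p)
    have "Suc p \<le> epochs p" unfolding epochs_def by (rule self_le_power) auto
    moreover have "epochs p \<le> horizon p" using N_pos by (simp add: horizon_def)
    ultimately have "s \<le> horizon p" "0 < ?m p" using elim by auto
    have "aoi_integral \<omega> (recv (horizon p)) = C + (\<Sum>k<horizon p. aoi_area_via_outage k \<omega>)"
      using aoi_integral_recv_via_outage[OF assms(1) \<open>s \<le> horizon p\<close>] by (simp add: C_def)
    also have "(\<Sum>k<horizon p. aoi_area_via_outage k \<omega>) = ?m p * B + outage_sum (horizon p) \<omega>"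
      unfolding sum_aoi_area_via_outage horizon_def sum_gap_area_periods B_def ..
    finally have "aoi_integral \<omega> (recv (horizon p)) = C + ?m p * B + outage_sum (horizon p) \<omega>"
      by simp
    moreover have "recv (horizon p) = (?m p + 1) * real n"
      unfolding horizon_def recv_mult_N by simp
    moreover have "(C + m * B + R) / ((m + 1) * real n) = (C / m + B + R / m) * (m / (m + 1)) / real n"
      if "0 < m" for m R :: real
    proof -
      have "C / m + B + R / m = (C + m * B + R) / m" using that by (simp add: field_simps)
      then show ?thesis using that n_pos by simp
    qed
    ultimately show ?case using \<open>0 < ?m p\<close> by simp
  qed
  moreover have "(\<lambda>p. C / ?m p) \<longlonglongrightarrow> 0" "(\<lambda>p. ?m p / (?m p + 1)) \<longlonglongrightarrow> 1"
    unfolding epochs_def by real_asymp+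
  then have "(\<lambda>p. (C / ?m p + B + outage_sum (horizon p) \<omega> / ?m p) * (?m p / (?m p + 1)) / real n)
      \<longlonglongrightarrow> (0 + B + outage_limit) * 1 / real n"
    using n_pos by (intro tendsto_intros outage_lim) auto
  from Lim_transform_eventually[OF this eventually_mono[OF ev sym]]
  show ?thesis by (simp add: B_def)
qed

lemma AE_aoi_time_average:
  "AE \<omega> in M. ((\<lambda>T. aoi_integral \<omega> T / T)
      \<longlongrightarrow> ((real n)\<^sup>2 + gap_autocorr 0 / 2 + outage_limit) / real n) at_top"
  using AE_success_after[of 0] AE_outage_sum_limit
proof eventually_elim
  case (elim \<omega>)
  then obtain s where "success s \<omega>" by auto
  let ?s = "\<lambda>p. recv (horizon p)"
  have recv_horizon: "?s p = real (epochs p + 1) * real n" for p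
    unfolding horizon_def by (rule recv_mult_N)
  show ?case
  proof (rule tendsto_ratio_of_mono_subsequence[where s = ?s])
    show "aoi_integral \<omega> a \<le> aoi_integral \<omega> b" if "0 \<le> a" "a \<le> b" for a b
      using that by (rule aoi_integral_mono)
    show "0 < ?s p" for p using n_pos by (simp add: recv_horizon)
    show "?s p \<le> ?s q" if "p \<le> q" for p q
      unfolding horizon_def using that by (intro recv_mono mult_le_mono1) (simp add: epochs_def power_mono)
    show "\<exists>p. T < ?s p" for T
    proof -
      obtain k where "T < recv k" using recv_unbounded by blast
      have "Suc k \<le> epochs k" unfolding epochs_def by (rule self_le_power) auto
      moreover have "epochs k \<le> horizon k" using N_pos by (simp add: horizon_def)
      ultimately have "recv k \<le> recv (horizon k)" by (intro recv_mono) simp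
      then show ?thesis using \<open>T < recv k\<close> by (intro exI[of _ k]) simp
    qed
    have "(\<lambda>p. (1 + real (epochs (Suc p))) / (1 + real (epochs p))) \<longlonglongrightarrow> 1"
      unfolding epochs_def by real_asymp
    then show "(\<lambda>p. ?s (Suc p) / ?s p) \<longlonglongrightarrow> 1" using n_pos by (simp add: recv_horizon)
  qed (simp_all add: aoi_integral_nonneg tendsto_aoi_integral_recv_horizon[OF \<open>success s \<omega>\<close> elim(2)])
qed

end

theorem mainTheorem5:
  fixes M :: "'a measure" and X :: "nat \<times> nat \<Rightarrow> 'a \<Rightarrow> bool"
    and N n :: nat and \<delta> :: "nat \<Rightarrow> real" and \<epsilon> :: real
  assumes "prob_space M"
    and "N \<ge> 1" and "n > 0"
    and "\<delta> 0 = 0"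
    and "\<And>i. i + 1 < N \<Longrightarrow> \<delta> i \<le> \<delta> (i + 1)"
    and "\<delta> (N - 1) < real n"
    and "0 < \<epsilon>" and "\<epsilon> < 1"
    and "prob_space.indep_vars M (\<lambda>_. count_space UNIV) X ({..<N} \<times> UNIV)"
    and "\<And>i m. i < N \<Longrightarrow> measure M {\<omega> \<in> space M. X (i, m) \<omega>} = 1 - \<epsilon>"
  shows "(\<forall>i<N. cond_mean M {\<omega> \<in> space M. X (i, 0) \<omega>} (mp_Y \<delta> n N X i)
             = (\<Sum>j<N. \<epsilon> ^ j * mp_T \<delta> n N ((i + j) mod N)) / (1 - \<epsilon> ^ N))
       \<and> (\<Sum>i<N. cond_mean M {\<omega> \<in> space M. X (i, 0) \<omega>} (mp_Y \<delta> n N X i))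
             = real n / (1 - \<epsilon>)
       \<and> (AE \<omega> in M. ((\<lambda>T. integral {0..T} (mp_aoi \<delta> n N X \<omega>) / T)
             \<longlongrightarrow> (1 - \<epsilon>) / (2 * real n * (1 - \<epsilon> ^ N)) * quad_form N (mp_M \<epsilon> N) (mp_T \<delta> n N)
                 + real n) at_top)"
proof -
  have "mp_scheme M X N n \<delta> \<epsilon>"
    unfolding mp_scheme_def mp_scheme_axioms_def using assms by auto
  then interpret mp_scheme M X N n \<delta> \<epsilon> .
  show ?thesis
    using cond_mean_mp_Y sum_cond_mean_mp_Y AE_aoi_time_average
    unfolding aoi_limit_eq aoi_integral_def by blast
qed

end
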